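(* Let $\mathcal{G}(t)$ be a matrix-weighted switching network satisfying Assumption 3 (described in the context) that is simultaneously structurally balanced with time-invariant bipartition $\mathcal{V}_1,\mathcal{V}_2$ of $\mathcal{V}$, and consider $\dot{\boldsymbol{x}}(t)=-L(t)\boldsymbol{x}(t)$, $\boldsymbol{x}(t)\in\mathbb{R}^{dn}$. Suppose there exist a subsequence $\{t_{k_l}\}_{l\in\mathbb{N}}$ of $\{t_k\}$ with $t_{k_0}=t_0$ and a number $h>0$ such that $\Delta t_{k_l}=t_{k_{l+1}}-t_{k_l}\le h$ and the integral network of $\mathcal{G}(t)$ over $[t_{k_l},t_{k_{l+1}})$ has a positive-negative spanning tree, for all $l\in\mathbb{N}$. Then the system admits bipartite consensus, and the bipartite consensus value is $$\boldsymbol{x}^*=C\Big(\boldsymbol{1}_n\otimes\Big(\tfrac{1}{n}(\boldsymbol{1}_n^\top\otimes I_d)C\boldsymbol{x}(0)\Big)\Big),$$ where $C=\mathrm{diag}(\sigma_1,\dots,\sigma_n)\in\mathbb{R}^{dn\times dn}$ with $\sigma_i=I_d$ if $i\in\mathcal{V}_1$ and $\sigma_i=-I_d$ if $i\in\mathcal{V}_2$.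
   Context: A matrix-weighted switching network $\mathcal{G}(t)=(\mathcal{V},\mathcal{E}(t),A(t))$ has node set $\mathcal{V}=\{1,\dots,n\}$, $n>1$; each edge $(i,j)\in\mathcal{E}(t)$ carries a symmetric weight $A_{ij}(t)\in\mathbb{R}^{d\times d}$ which is either positive (semi-)definite or negative (semi-)definite, with $A_{ij}=A_{ji}$, $A_{ii}=0$, $A_{ij}(t)=0$ if $(i,j)\notin\mathcal{E}(t)$; standing assumption: for each pair $(i,j)$ the weight $A_{ij}(t)$ has the same sign type for all $t$. Set $|A_{ij}|=A_{ij}$ if $A_{ij}\succeq0$ and $-A_{ij}$ if $A_{ij}\preceq0$; $\mathrm{sgn}(A)$ is $1$, $-1$, $0$ for nonzero PSD, nonzero NSD, zero $A$. With $A=[A_{ij}]\in\mathbb{R}^{dn\times dn}$ and $D=\mathrm{diag}(D_1,\dots,D_n)$, $D_i=\sum_{j:(i,j)\in\mathcal{E}}|A_{ij}|$, the matrix-valued Laplacian is $L=D-A$; $\dot{\boldsymbol{x}}=-L(t)\boldsymbol{x}$ is the stacked form of $\dot{\boldsymbol{x}}_i=-\sum_j|A_{ij}|(\boldsymbol{x}_i-\mathrm{sgn}(A_{ij})\boldsymbol{x}_j)$. Assumption 1: there is a sequence $\{t_k\}_{k\in\mathbb{N}}$ with $t_0=0$, $t_k\to\infty$, $t_{k+1}-t_k\ge\alpha>0$, and $\mathcal{G}(t)$ is constant on each $[t_k,t_{k+1})$. Assumption 2: additionally $\mathcal{G}(t)$ is always chosen from a finite set $\{\mathcal{G}_1,\dots,\mathcal{G}_M\}$,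 each appearing infinitely many times. Assumption 3: Assumptions 1 and 2 hold and each dwell time $t_{k+1}-t_k$ is chosen from a finite set of positive numbers. Integral network over $[t_1,t_2)$: node set $\mathcal{V}$, edges those $(i,j)$ with $\int_{t_1}^{t_2}|A_{ij}(t)|dt$ nonzero (positive semidefinite or definite), weights $\widetilde{A}=\frac{1}{t_2-t_1}\int_{t_1}^{t_2}A(t)dt$. Simultaneously structurally balanced: there is a time-invariant bipartition $\mathcal{V}_1\cup\mathcal{V}_2=\mathcal{V}$, $\mathcal{V}_1\cap\mathcal{V}_2=\emptyset$, such that at all times, weights of edges within each part are positive (semi-)definite and weights of edges between the parts are negative (semi-)definite. A positive-negative spanning tree of a matrix-weighted graph is a spanning tree (connected, all $n$ nodes, $n-1$ edges) each of whose edges has a positive definite or negative definite weight. Bipartite consensus: all limits $\lim_{t\to\infty}\boldsymbol{x}_i(t)$ exist and there is a partition of $\mathcal{V}$ into two parts such that agents in the same part have equal limits and agents in different parts have different limits. *)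

theory Defs
  imports "HOL-Analysis.Analysis"
begin

definition psd_mat :: "real^'d^'d \<Rightarrow> bool" where
  "psd_mat M \<longleftrightarrow> (\<forall>v. 0 \<le> v \<bullet> (M *v v))"

definition nsd_mat :: "real^'d^'d \<Rightarrow> bool" where
  "nsd_mat M \<longleftrightarrow> psd_mat (- M)"

definition pd_mat :: "real^'d^'d \<Rightarrow> bool" where
  "pd_mat M \<longleftrightarrow> (\<forall>v. v \<noteq> 0 \<longrightarrow> 0 < v \<bullet> (M *v v))"

definition nd_mat :: "real^'d^'d \<Rightarrow> bool" where
  "nd_mat M \<longleftrightarrow> pd_mat (- M)"

definition abs_mat :: "real^'d^'d \<Rightarrow> real^'d^'d" where
  "abs_mat M = (if psd_mat M then M else - M)"

definition sgn_mat :: "real^'d^'d \<Rightarrow> real" where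
  "sgn_mat M = (if M = 0 then 0 else if psd_mat M then 1 else -1)"

text \<open>A network is given by its weight function A t i j (edge (i,j) present at t iff A t i j is nonzero).\<close>
definition valid_network :: "(real \<Rightarrow> 'n \<Rightarrow> 'n \<Rightarrow> real^'d^'d) \<Rightarrow> bool" where
  "valid_network A \<longleftrightarrow>
     (\<forall>t i j. transpose (A t i j) = A t i j \<and> (psd_mat (A t i j) \<or> nsd_mat (A t i j))
              \<and> A t i j = A t j i \<and> A t i i = 0) \<and>
     (\<forall>i j. (\<forall>t. psd_mat (A t i j)) \<or> (\<forall>t. nsd_mat (A t i j)))"

definition assumption1 :: "(real \<Rightarrow> 'n \<Rightarrow> 'n \<Rightarrow> real^'d^'d) \<Rightarrow> (nat \<Rightarrow> real) \<Rightarrow> bool" where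
  "assumption1 A tk \<longleftrightarrow>
     tk 0 = 0 \<and> filterlim tk at_top sequentially \<and>
     (\<exists>\<alpha>>0. \<forall>k. tk (Suc k) - tk k \<ge> \<alpha>) \<and>
     (\<forall>k t. tk k \<le> t \<and> t < tk (Suc k) \<longrightarrow> A t = A (tk k))"

definition assumption2 :: "(real \<Rightarrow> 'n \<Rightarrow> 'n \<Rightarrow> real^'d^'d) \<Rightarrow> (nat \<Rightarrow> real) \<Rightarrow> bool" where
  "assumption2 A tk \<longleftrightarrow> assumption1 A tk \<and>
     (\<exists>Gs. finite Gs \<and> (\<forall>k. A (tk k) \<in> Gs) \<and> (\<forall>g\<in>Gs. infinite {k. A (tk k) = g}))"

definition assumption3 :: "(real \<Rightarrow> 'n \<Rightarrow> 'n \<Rightarrow> real^'d^'d) \<Rightarrow> (nat \<Rightarrow> real) \<Rightarrow> bool" where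
  "assumption3 A tk \<longleftrightarrow> assumption1 A tk \<and> assumption2 A tk \<and>
     (\<exists>T. finite T \<and> (\<forall>\<tau>\<in>T. \<tau> > 0) \<and> (\<forall>k. tk (Suc k) - tk k \<in> T))"

definition simultaneously_structurally_balanced ::
  "(real \<Rightarrow> 'n \<Rightarrow> 'n \<Rightarrow> real^'d^'d) \<Rightarrow> 'n set \<Rightarrow> 'n set \<Rightarrow> bool" where
  "simultaneously_structurally_balanced A V1 V2 \<longleftrightarrow>
     V1 \<union> V2 = UNIV \<and> V1 \<inter> V2 = {} \<and>
     (\<forall>t i j. ((i \<in> V1 \<and> j \<in> V1) \<or> (i \<in> V2 \<and> j \<in> V2)) \<longrightarrow> psd_mat (A t i j)) \<and>
     (\<forall>t i j. ((i \<in> V1 \<and> j \<in> V2) \<or> (i \<in> V2 \<and> j \<in> V1)) \<longrightarrow> nsd_mat (A t i j))"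

definition integral_weight :: "(real \<Rightarrow> 'n \<Rightarrow> 'n \<Rightarrow> real^'d^'d) \<Rightarrow> real \<Rightarrow> real \<Rightarrow> 'n \<Rightarrow> 'n \<Rightarrow> real^'d^'d" where
  "integral_weight A t1 t2 i j = (1 / (t2 - t1)) *\<^sub>R integral {t1..t2} (\<lambda>t. A t i j)"

definition integral_edge :: "(real \<Rightarrow> 'n \<Rightarrow> 'n \<Rightarrow> real^'d^'d) \<Rightarrow> real \<Rightarrow> real \<Rightarrow> 'n \<Rightarrow> 'n \<Rightarrow> bool" where
  "integral_edge A t1 t2 i j \<longleftrightarrow> integral {t1..t2} (\<lambda>t. abs_mat (A t i j)) \<noteq> 0"

definition spanning_tree :: "'n::finite set set \<Rightarrow> bool" where
  "spanning_tree T \<longleftrightarrow>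
     (\<forall>e\<in>T. \<exists>u v. u \<noteq> v \<and> e = {u, v}) \<and>
     card T = CARD('n) - 1 \<and>
     (\<forall>i j. (i, j) \<in> {(u, v). {u, v} \<in> T}\<^sup>*)"

definition has_pn_spanning_tree_integral ::
  "(real \<Rightarrow> 'n::finite \<Rightarrow> 'n \<Rightarrow> real^'d^'d) \<Rightarrow> real \<Rightarrow> real \<Rightarrow> bool" where
  "has_pn_spanning_tree_integral A t1 t2 \<longleftrightarrow>
     (\<exists>T. spanning_tree T \<and>
        (\<forall>u v. {u, v} \<in> T \<longrightarrow> integral_edge A t1 t2 u v \<and>
            (pd_mat (integral_weight A t1 t2 u v) \<or> nd_mat (integral_weight A t1 t2 u v))))"

text \<open>x solves dx_i/dt = - sum_j |A_ij| (x_i - sgn(A_ij) x_j) for t \<ge> 0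
  (continuous, with right derivative given by the right-continuous switching signal).\<close>
definition solves_network :: "(real \<Rightarrow> 'n::finite \<Rightarrow> 'n \<Rightarrow> real^'d^'d) \<Rightarrow> (real \<Rightarrow> 'n \<Rightarrow> real^'d) \<Rightarrow> bool" where
  "solves_network A x \<longleftrightarrow>
     (\<forall>i. continuous_on {0..} (\<lambda>t. x t i)) \<and>
     (\<forall>i. \<forall>t\<ge>0. ((\<lambda>s. x s i) has_vector_derivative
         (- (\<Sum>j\<in>UNIV. abs_mat (A t i j) *v (x t i - sgn_mat (A t i j) *\<^sub>R x t j))))
         (at t within {t..}))"

definition bipartite_consensus :: "(real \<Rightarrow> 'n \<Rightarrow> real^'d) \<Rightarrow> bool" where
  "bipartite_consensus x \<longleftrightarrow>
     (\<forall>i. \<exists>l. ((\<lambda>t. x t i) \<longlongrightarrow> l) at_top) \<and>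
     (\<exists>P. \<forall>i j. ((i \<in> P \<longleftrightarrow> j \<in> P) \<longrightarrow> Lim at_top (\<lambda>t. x t i) = Lim at_top (\<lambda>t. x t j)) \<and>
              ((i \<in> P \<longleftrightarrow> j \<notin> P) \<longrightarrow> Lim at_top (\<lambda>t. x t i) \<noteq> Lim at_top (\<lambda>t. x t j)))"

end

theory Submission
  imports Defs
begin

text \<open>Flipping the sign of the agents in \<open>V2\<close>, \<open>y_i = \<sigma>_i x_i\<close>, turns the signed dynamics into
  the flow \<open>y' = - L(|A(t)|) y\<close> of a Laplacian with positive semidefinite matrix weights. Along it
  the sum of the \<open>y_i\<close> is conserved and the energy \<open>\<Sum>|y_i|\<^sup>2\<close> decreases at the rate of the
  Dirichlet form \<open>\<Sum>(y_i - y_j)\<^sup>T |A_ij| (y_i - y_j)\<close>. While the network is frozen the Dirichlet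
  form can only decay linearly, so the dwell time bound makes it at most a multiple of the energy
  drop of the switching interval. Over a window \<open>[t_k_l, t_k_(l+1))\<close> the agents therefore move by
  \<open>O(\<surd>drop)\<close>, and integrating along the edges of the positive-negative spanning tree of the
  integral network bounds every \<open>|y_i - y_j|\<^sup>2\<close> by a multiple of the drop of the window; the
  finiteness in Assumption 3 makes all constants uniform. Hence the disagreement from the mean
  of \<open>y(0)\<close> contracts geometrically from window to window, and \<open>x_i = \<sigma>_i y_i\<close>.\<close>

section \<open>One-sided derivatives\<close>

lemma right_deriv_pos_imp_le:
  fixes f :: "real \<Rightarrow> real"
  assumes "a \<le> b" and cont: "continuous_on {a..b} f"
    and deriv: "\<And>x. a \<le> x \<Longrightarrow> x < b \<Longrightarrow> (f has_real_derivative f' x) (at x within {x..})"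
    and pos: "\<And>x. a \<le> x \<Longrightarrow> x < b \<Longrightarrow> 0 < f' x"
  shows "f a \<le> f b"
proof (rule ccontr)
  assume "\<not> f a \<le> f b"
  define S where "S = {a..b} \<inter> f -` {f a..}"
  have "closed S"
    unfolding S_def by (intro continuous_closed_preimage cont) auto
  moreover have "bounded S" by (rule bounded_subset[of "{a..b}"]) (auto simp: S_def)
  ultimately have "compact S" by (simp add: compact_eq_bounded_closed)
  moreover have "a \<in> S" using \<open>a \<le> b\<close> by (simp add: S_def)
  ultimately obtain c where "c \<in> S" and c_max: "\<And>s. s \<in> S \<Longrightarrow> s \<le> c"
    by (metis compact_attains_sup empty_iff)
  then have c: "a \<le> c" "c \<le> b" "f a \<le> f c" by (auto simp: S_def)
  with \<open>\<not> f a \<le> f b\<close> have "c \<noteq> b" by auto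
  with c have "c < b" by simp
  obtain d where "d > 0" and inc: "\<And>h. 0 < h \<Longrightarrow> h < d \<Longrightarrow> f c < f (c + h)"
    using has_real_derivative_pos_inc_right[OF deriv pos, of c] c \<open>c < b\<close> by auto
  define h where "h = min (d / 2) (b - c)"
  have "0 < h" "h < d" using \<open>d > 0\<close> \<open>c < b\<close> by (auto simp: h_def)
  moreover have "c + h \<le> b" by (simp add: h_def)
  ultimately have "c + h \<in> S" using inc[of h] c by (simp add: S_def)
  with c_max[of "c + h"] \<open>0 < h\<close> show False by simp
qed

lemma right_deriv_nonneg_imp_le:
  fixes f :: "real \<Rightarrow> real"
  assumes "a \<le> b" and cont: "continuous_on {a..b} f"
    and deriv: "\<And>x. a \<le> x \<Longrightarrow> x < b \<Longrightarrow> (f has_real_derivative f' x) (at x within {x..})"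
    and nonneg: "\<And>x. a \<le> x \<Longrightarrow> x < b \<Longrightarrow> 0 \<le> f' x"
  shows "f a \<le> f b"
proof (rule field_le_epsilon)
  fix e :: real
  assume "0 < e"
  define \<epsilon> where "\<epsilon> = e / (b - a + 1)"
  have "0 < \<epsilon>" using \<open>0 < e\<close> \<open>a \<le> b\<close> by (simp add: \<epsilon>_def)
  have "f a + \<epsilon> * a \<le> f b + \<epsilon> * b"
  proof (rule right_deriv_pos_imp_le[where f = "\<lambda>x. f x + \<epsilon> * x"])
    show "continuous_on {a..b} (\<lambda>x. f x + \<epsilon> * x)"
      by (intro continuous_intros cont)
    fix x assume "a \<le> x" "x < b"
    then show "((\<lambda>x. f x + \<epsilon> * x) has_real_derivative f' x + \<epsilon>) (at x within {x..})"
      by (auto intro!: derivative_eq_intros deriv)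
    show "0 < f' x + \<epsilon>" using nonneg[OF \<open>a \<le> x\<close> \<open>x < b\<close>] \<open>0 < \<epsilon>\<close> by simp
  qed fact
  moreover have "\<epsilon> * (b - a) \<le> e"
    using \<open>0 < e\<close> \<open>a \<le> b\<close> by (simp add: \<epsilon>_def field_simps)
  ultimately show "f a \<le> f b + e" by (simp add: algebra_simps)
qed

lemma norm_diff_le_right_deriv:
  fixes f :: "real \<Rightarrow> 'a::real_inner"
  assumes "a \<le> b" and f_cont: "continuous_on {a..b} f" and \<phi>_cont: "continuous_on {a..b} \<phi>"
    and f': "\<And>x. a \<le> x \<Longrightarrow> x < b \<Longrightarrow> (f has_vector_derivative f' x) (at x within {x..})"
    and \<phi>': "\<And>x. a \<le> x \<Longrightarrow> x < b \<Longrightarrow> (\<phi> has_real_derivative \<phi>' x) (at x within {x..})"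
    and bound: "\<And>x. a \<le> x \<Longrightarrow> x < b \<Longrightarrow> norm (f' x) \<le> \<phi>' x"
  shows "norm (f b - f a) \<le> \<phi> b - \<phi> a"
proof -
  define w where "w = f b - f a"
  \<comment> \<open>Project onto the direction of the total increment.\<close>
  have "norm w * \<phi> a - w \<bullet> f a \<le> norm w * \<phi> b - w \<bullet> f b"
  proof (rule right_deriv_nonneg_imp_le[where f = "\<lambda>x. norm w * \<phi> x - w \<bullet> f x"
        and f' = "\<lambda>x. norm w * \<phi>' x - w \<bullet> f' x"])
    show "continuous_on {a..b} (\<lambda>x. norm w * \<phi> x - w \<bullet> f x)"
      by (intro continuous_intros f_cont \<phi>_cont)
    fix x assume x: "a \<le> x" "x < b"
    have "((\<lambda>x. w \<bullet> f x) has_real_derivative w \<bullet> f' x) (at x within {x..})"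
      using bounded_linear.has_vector_derivative[OF bounded_linear_inner_right f'[OF x]]
      by (simp add: has_real_derivative_iff_has_vector_derivative)
    then show "((\<lambda>x. norm w * \<phi> x - w \<bullet> f x) has_real_derivative norm w * \<phi>' x - w \<bullet> f' x)
        (at x within {x..})"
      by (rule DERIV_diff[OF DERIV_cmult[OF \<phi>'[OF x]]])
    have "w \<bullet> f' x \<le> norm w * norm (f' x)" by (rule norm_cauchy_schwarz)
    also have "\<dots> \<le> norm w * \<phi>' x" by (intro mult_left_mono bound x) simp
    finally show "0 \<le> norm w * \<phi>' x - w \<bullet> f' x" by simp
  qed fact
  moreover have "norm w * norm w = w \<bullet> f b - w \<bullet> f a"
    by (metis w_def inner_diff_right power2_eq_square power2_norm_eq_inner)
  ultimately have "norm w * norm w \<le> norm w * (\<phi> b - \<phi> a)"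
    by (simp add: algebra_simps)
  moreover have "\<phi> a \<le> \<phi> b"
  proof (rule right_deriv_nonneg_imp_le[OF \<open>a \<le> b\<close> \<phi>_cont \<phi>'])
    show "0 \<le> \<phi>' x" if "a \<le> x" "x < b" for x
      using bound[OF that] norm_ge_zero[of "f' x"] by linarith
  qed
  ultimately show ?thesis
    by (cases "w = 0") (auto simp: w_def)
qed

lemma has_real_derivative_affine: "((\<lambda>s. c * (s - a)) has_real_derivative c) (at x within S)"
  by (auto intro!: derivative_eq_intros)

section \<open>Symmetric matrices and quadratic forms\<close>

lemma matrix_vector_mult_uminus_left [simp]:
  fixes B :: "real^'n^'m"
  shows "(- B) *v v = - (B *v v)"
  by (metis diff_0 matrix_vector_mult_0 matrix_vector_mult_diff_rdistrib)

lemma continuous_on_matrix_vector_mult [continuous_intros]: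
  fixes A :: "real^'n^'m"
  shows "continuous_on S f \<Longrightarrow> continuous_on S (\<lambda>x. A *v f x)"
  by (rule bounded_linear.continuous_on[OF matrix_vector_mul_bounded_linear])

lemma linear_quadratic_form: "linear (\<lambda>M::real^'d^'d. e \<bullet> (M *v e))"
  by (rule linearI) (simp_all add: matrix_vector_mult_add_rdistrib inner_add_right
      flip: scaleR_matrix_vector_assoc)

lemma symmetric_matrix_inner_commute:
  fixes B :: "real^'d^'d"
  assumes "transpose B = B"
  shows "u \<bullet> (B *v v) = v \<bullet> (B *v u)"
  by (metis assms dot_lmul_matrix inner_commute transpose_matrix_vector)

lemma quadratic_form_add_scaleR:
  fixes B :: "real^'d^'d"
  assumes "transpose B = B"
  shows "(u + c *\<^sub>R v) \<bullet> (B *v (u + c *\<^sub>R v))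
    = u \<bullet> (B *v u) + 2 * c * (u \<bullet> (B *v v)) + c\<^sup>2 * (v \<bullet> (B *v v))"
  using symmetric_matrix_inner_commute[OF assms, of v u]
  by (simp add: algebra_simps power2_eq_square)

lemma quadratic_form_nonneg: "psd_mat B \<Longrightarrow> 0 \<le> v \<bullet> (B *v v)"
  by (simp add: psd_mat_def)

lemma psd_mat_cauchy_schwarz:
  fixes B :: "real^'d^'d"
  assumes "transpose B = B" "psd_mat B"
  shows "(u \<bullet> (B *v v))\<^sup>2 \<le> (u \<bullet> (B *v u)) * (v \<bullet> (B *v v))"
proof -
  define p where "p = u \<bullet> (B *v u)"
  define q where "q = u \<bullet> (B *v v)"
  define r where "r = v \<bullet> (B *v v)"
  have quadratic: "0 \<le> p + 2 * c * q + c\<^sup>2 * r" for c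
    using quadratic_form_nonneg[OF assms(2), of "u + c *\<^sub>R v"] quadratic_form_add_scaleR[OF assms(1)]
    by (simp add: p_def q_def r_def)
  have "0 \<le> r" using quadratic_form_nonneg[OF assms(2)] by (simp add: r_def)
  show ?thesis
  proof (cases "r = 0")
    case True
    have "q = 0"
    proof (rule ccontr)
      assume "q \<noteq> 0"
      then have "p + 2 * (- (p + 1) / (2 * q)) * q = -1" by (simp add: field_simps)
      with quadratic[of "- (p + 1) / (2 * q)"] True show False by simp
    qed
    with True show ?thesis unfolding p_def[symmetric] q_def[symmetric] r_def[symmetric] by simp
  next
    case False
    with \<open>0 \<le> r\<close> have "0 < r" by simp
    have "p + 2 * (- q / r) * q + (- q / r)\<^sup>2 * r = p - q\<^sup>2 / r"
      using \<open>0 < r\<close> by (simp add: field_simps power2_eq_square)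
    with quadratic[of "- q / r"] have "q\<^sup>2 / r \<le> p" by simp
    with \<open>0 < r\<close> show ?thesis
      unfolding p_def[symmetric] q_def[symmetric] r_def[symmetric] by (simp add: field_simps)
  qed
qed

lemma quadratic_form_le_onorm:
  fixes B :: "real^'d^'d"
  shows "\<bar>v \<bullet> (B *v v)\<bar> \<le> onorm ((*v) B) * (norm v)\<^sup>2"
proof -
  have "\<bar>v \<bullet> (B *v v)\<bar> \<le> norm v * norm (B *v v)" by (rule Cauchy_Schwarz_ineq2)
  also have "\<dots> \<le> norm v * (onorm ((*v) B) * norm v)"
    by (intro mult_left_mono onorm matrix_vector_mul_bounded_linear) simp
  finally show ?thesis by (simp add: power2_eq_square ac_simps)
qed

lemma psd_mat_norm_sq_le:
  fixes B :: "real^'d^'d"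
  assumes "transpose B = B" "psd_mat B" "onorm ((*v) B) \<le> K"
  shows "(norm (B *v v))\<^sup>2 \<le> K * (v \<bullet> (B *v v))"
proof -
  define w where "w = B *v v"
  have "((norm w)\<^sup>2)\<^sup>2 \<le> (w \<bullet> (B *v w)) * (v \<bullet> (B *v v))"
    using psd_mat_cauchy_schwarz[OF assms(1,2), of w v] by (simp add: w_def power2_norm_eq_inner)
  also have "\<dots> \<le> (K * (norm w)\<^sup>2) * (v \<bullet> (B *v v))"
  proof (rule mult_right_mono)
    have "w \<bullet> (B *v w) \<le> onorm ((*v) B) * (norm w)\<^sup>2"
      using quadratic_form_le_onorm[of w B] by linarith
    also have "\<dots> \<le> K * (norm w)\<^sup>2" by (intro mult_right_mono assms(3)) simp
    finally show "w \<bullet> (B *v w) \<le> K * (norm w)\<^sup>2" .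
  qed (rule quadratic_form_nonneg[OF assms(2)])
  finally have *: "(norm w)\<^sup>2 * (norm w)\<^sup>2 \<le> (norm w)\<^sup>2 * (K * (v \<bullet> (B *v v)))"
    by (simp add: power2_eq_square ac_simps)
  show ?thesis
  proof (cases "w = 0")
    case True
    have "0 \<le> K" using onorm_pos_le[OF matrix_vector_mul_bounded_linear] assms(3) by (rule order_trans)
    with True show ?thesis using quadratic_form_nonneg[OF assms(2), of v] by (simp add: w_def)
  next
    case False
    from * show ?thesis unfolding w_def by (rule mult_left_le_imp_le) (use False in \<open>simp add: w_def\<close>)
  qed
qed

lemma psd_mat_quadratic_form_add_le:
  fixes B :: "real^'d^'d"
  assumes "transpose B = B" "psd_mat B"
  shows "(u + w) \<bullet> (B *v (u + w)) \<le> 2 * (u \<bullet> (B *v u)) + 2 * (w \<bullet> (B *v w))"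
  using quadratic_form_nonneg[OF assms(2), of "u + (-1) *\<^sub>R w"]
    quadratic_form_add_scaleR[OF assms(1), of u "-1" w] quadratic_form_add_scaleR[OF assms(1), of u 1 w]
  by simp

lemma symmetric_matrix_eq_0_if_quadratic_form_eq_0:
  fixes B :: "real^'d^'d"
  assumes "transpose B = B" "\<And>v. v \<bullet> (B *v v) = 0"
  shows "B = 0"
proof -
  have "u \<bullet> (B *v v) = 0" for u v
    using quadratic_form_add_scaleR[OF assms(1), of u 1 v] assms(2)[of "u + v"] assms(2)[of u] assms(2)[of v]
    by simp
  then have "B *v v = 0" for v by (metis inner_eq_zero_iff)
  then show ?thesis by (metis matrix_vector_mult_0 matrix_eq)
qed

lemma psd_nsd_mat_imp_0:
  fixes B :: "real^'d^'d"
  assumes "transpose B = B" "psd_mat B" "nsd_mat B"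
  shows "B = 0"
proof (rule symmetric_matrix_eq_0_if_quadratic_form_eq_0[OF assms(1)])
  fix v
  show "v \<bullet> (B *v v) = 0"
    using quadratic_form_nonneg[OF assms(2), of v] quadratic_form_nonneg[of "- B" v] assms(3)
    by (simp add: nsd_mat_def)
qed

lemma definite_mat_coercive:
  fixes W :: "real^'d^'d"
  assumes "pd_mat W \<or> nd_mat W"
  shows "\<exists>\<mu>>0. \<forall>v. \<mu> * (norm v)\<^sup>2 \<le> \<bar>v \<bullet> (W *v v)\<bar>"
proof -
  define q where "q v = \<bar>v \<bullet> (W *v v)\<bar>" for v :: "real^'d"
  have q_pos: "v \<noteq> 0 \<Longrightarrow> 0 < q v" for v
    using assms unfolding q_def pd_mat_def nd_mat_def by fastforce
  have q_scale: "q (c *\<^sub>R v) = c\<^sup>2 * q v" for c v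
    by (simp add: q_def matrix_vector_mult_scaleR abs_mult power2_eq_square)
  have "continuous_on (sphere 0 1) q"
    unfolding q_def by (intro continuous_intros linear_continuous_on) simp
  moreover have "axis undefined 1 \<in> sphere (0::real^'d) 1" by simp
  ultimately obtain v\<^sub>0 where v\<^sub>0: "v\<^sub>0 \<in> sphere 0 1" "\<And>v. v \<in> sphere 0 1 \<Longrightarrow> q v\<^sub>0 \<le> q v"
    using continuous_attains_inf[OF compact_sphere] by (metis empty_iff)
  have "q v\<^sub>0 * (norm v)\<^sup>2 \<le> q v" for v
  proof (cases "v = 0")
    case False
    then have "q v\<^sub>0 \<le> q ((1 / norm v) *\<^sub>R v)" by (intro v\<^sub>0(2)) simp
    with False show ?thesis by (simp add: q_scale field_simps)
  qed (simp add: q_def)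
  moreover have "0 < q v\<^sub>0" using v\<^sub>0(1) by (intro q_pos) auto
  ultimately show ?thesis unfolding q_def by blast
qed

lemma finite_definite_mats_uniformly_coercive:
  fixes S :: "(real^'d^'d) set"
  assumes "finite S" "\<And>W. W \<in> S \<Longrightarrow> pd_mat W \<or> nd_mat W"
  obtains \<mu> where "0 < \<mu>" "\<And>W v. W \<in> S \<Longrightarrow> \<mu> * (norm v)\<^sup>2 \<le> \<bar>v \<bullet> (W *v v)\<bar>"
proof -
  obtain m where m: "\<And>W. W \<in> S \<Longrightarrow> 0 < m W \<and> (\<forall>v. m W * (norm v)\<^sup>2 \<le> \<bar>v \<bullet> (W *v v)\<bar>)"
    using definite_mat_coercive assms(2) by metis
  define \<mu> where "\<mu> = Min (insert 1 (m ` S))"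
  have "0 < \<mu>" using assms(1) m by (auto simp: \<mu>_def)
  moreover have "\<mu> * (norm v)\<^sup>2 \<le> \<bar>v \<bullet> (W *v v)\<bar>" if "W \<in> S" for W v
  proof -
    have "\<mu> \<le> m W" using assms(1) that by (simp add: \<mu>_def)
    then have "\<mu> * (norm v)\<^sup>2 \<le> m W * (norm v)\<^sup>2" by (rule mult_right_mono) simp
    with m[OF that] show ?thesis by (meson order_trans)
  qed
  ultimately show thesis by (rule that)
qed

section \<open>Matrix-weighted Laplacians\<close>

definition symmetric_psd_weights :: "('n \<Rightarrow> 'n \<Rightarrow> real^'d^'d) \<Rightarrow> bool" where
  "symmetric_psd_weights W \<longleftrightarrow>
     (\<forall>i j. transpose (W i j) = W i j \<and> psd_mat (W i j) \<and> W i j = W j i)"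

definition laplacian :: "('n::finite \<Rightarrow> 'n \<Rightarrow> real^'d^'d) \<Rightarrow> ('n \<Rightarrow> real^'d) \<Rightarrow> 'n \<Rightarrow> real^'d" where
  "laplacian W y i = (\<Sum>j\<in>UNIV. W i j *v (y i - y j))"

text \<open>Summed over ordered pairs, so this is twice the quadratic form of the Laplacian.\<close>
definition dirichlet_form :: "('n::finite \<Rightarrow> 'n \<Rightarrow> real^'d^'d) \<Rightarrow> ('n \<Rightarrow> real^'d) \<Rightarrow> real" where
  "dirichlet_form W y = (\<Sum>i\<in>UNIV. \<Sum>j\<in>UNIV. (y i - y j) \<bullet> (W i j *v (y i - y j)))"

definition energy :: "('n::finite \<Rightarrow> real^'d) \<Rightarrow> real" where
  "energy y = (\<Sum>i\<in>UNIV. y i \<bullet> y i)"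

context
  fixes W :: "'n::finite \<Rightarrow> 'n \<Rightarrow> real^'d^'d"
  assumes W: "symmetric_psd_weights W"
begin

private lemma edge_flow_antisym: "W j i *v (y j - y i) = - (W i j *v (y i - y j))"
  using W linear_neg[OF matrix_vector_mul_linear, of "W i j" "y i - y j"]
  by (simp add: symmetric_psd_weights_def)

lemma sum_laplacian_eq_0: "(\<Sum>i\<in>UNIV. laplacian W y i) = 0"
proof -
  define f where "f i j = W i j *v (y i - y j)" for i j
  have anti: "f j i = - f i j" for i j unfolding f_def by (rule edge_flow_antisym)
  have "(\<Sum>i\<in>UNIV. \<Sum>j\<in>UNIV. f i j) = (\<Sum>i\<in>UNIV. \<Sum>j\<in>UNIV. f j i)" by (rule sum.swap)
  also have "\<dots> = (\<Sum>i\<in>UNIV. \<Sum>j\<in>UNIV. - f i j)" by (intro sum.cong refl anti)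
  also have "\<dots> = - (\<Sum>i\<in>UNIV. \<Sum>j\<in>UNIV. f i j)" by (simp add: sum_negf)
  finally have "(2::real) *\<^sub>R (\<Sum>i\<in>UNIV. \<Sum>j\<in>UNIV. f i j) = 0"
    by (simp add: scaleR_2 eq_neg_iff_add_eq_0)
  then show ?thesis by (simp add: laplacian_def f_def)
qed

lemma inner_laplacian_sum: "(\<Sum>i\<in>UNIV. y i \<bullet> laplacian W y i) = dirichlet_form W y / 2"
proof -
  define f where "f i j = y i \<bullet> (W i j *v (y i - y j))" for i j
  have "(\<Sum>i\<in>UNIV. y i \<bullet> laplacian W y i) = (\<Sum>i\<in>UNIV. \<Sum>j\<in>UNIV. f i j)"
    by (simp add: laplacian_def f_def inner_sum_right)
  moreover have "\<dots> = (\<Sum>i\<in>UNIV. \<Sum>j\<in>UNIV. f j i)" by (rule sum.swap)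
  moreover have "f i j + f j i = (y i - y j) \<bullet> (W i j *v (y i - y j))" for i j
    unfolding f_def edge_flow_antisym[where i = i and j = j] by (simp add: inner_diff_left)
  then have "(\<Sum>i\<in>UNIV. \<Sum>j\<in>UNIV. f i j) + (\<Sum>i\<in>UNIV. \<Sum>j\<in>UNIV. f j i) = dirichlet_form W y"
    by (simp add: dirichlet_form_def flip: sum.distrib)
  ultimately show ?thesis by linarith
qed

lemma dirichlet_form_inner_laplacian:
  "(\<Sum>i\<in>UNIV. \<Sum>j\<in>UNIV. (W i j *v (y i - y j)) \<bullet> (laplacian W y j - laplacian W y i))
     = - 2 * (\<Sum>i\<in>UNIV. laplacian W y i \<bullet> laplacian W y i)"
proof -
  define f where "f i j = W i j *v (y i - y j)" for i j
  have col: "(\<Sum>i\<in>UNIV. f i j) = - laplacian W y j" for j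
  proof -
    have "(\<Sum>i\<in>UNIV. f i j) = (\<Sum>i\<in>UNIV. - f j i)"
      unfolding f_def by (intro sum.cong refl edge_flow_antisym)
    then show ?thesis by (simp add: f_def laplacian_def sum_negf)
  qed
  have "(\<Sum>i\<in>UNIV. \<Sum>j\<in>UNIV. f i j \<bullet> laplacian W y j)
      = (\<Sum>j\<in>UNIV. (\<Sum>i\<in>UNIV. f i j) \<bullet> laplacian W y j)"
    by (subst sum.swap) (simp add: inner_sum_left)
  also have "\<dots> = - (\<Sum>j\<in>UNIV. laplacian W y j \<bullet> laplacian W y j)"
    by (simp add: col sum_negf)
  finally have "(\<Sum>i\<in>UNIV. \<Sum>j\<in>UNIV. f i j \<bullet> laplacian W y j) = \<dots>" .
  moreover have "(\<Sum>i\<in>UNIV. \<Sum>j\<in>UNIV. f i j \<bullet> laplacian W y i)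
      = (\<Sum>i\<in>UNIV. laplacian W y i \<bullet> laplacian W y i)"
    by (simp add: f_def laplacian_def inner_sum_left)
  ultimately show ?thesis
    by (simp add: f_def inner_diff_right sum_subtractf)
qed

lemma dirichlet_form_term_nonneg: "0 \<le> (y i - y j) \<bullet> (W i j *v (y i - y j))"
  using W by (simp add: symmetric_psd_weights_def quadratic_form_nonneg)

lemma dirichlet_form_nonneg: "0 \<le> dirichlet_form W y"
  unfolding dirichlet_form_def by (intro sum_nonneg dirichlet_form_term_nonneg)

lemma dirichlet_form_ge_term: "(y u - y v) \<bullet> (W u v *v (y u - y v)) \<le> dirichlet_form W y"
proof -
  have "(y u - y v) \<bullet> (W u v *v (y u - y v)) \<le> (\<Sum>j\<in>UNIV. (y u - y j) \<bullet> (W u j *v (y u - y j)))"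
    by (rule member_le_sum) (auto intro: dirichlet_form_term_nonneg)
  also have "\<dots> \<le> dirichlet_form W y"
    unfolding dirichlet_form_def
    by (rule member_le_sum[where f = "\<lambda>i. \<Sum>j\<in>UNIV. (y i - y j) \<bullet> (W i j *v (y i - y j))"])
      (auto intro: sum_nonneg dirichlet_form_term_nonneg)
  finally show ?thesis .
qed

lemma sum_norm_laplacian_sq_le:
  fixes K :: real
  assumes "\<And>i j. onorm ((*v) (W i j)) \<le> K"
  shows "(\<Sum>i\<in>UNIV. (norm (laplacian W y i))\<^sup>2) \<le> real CARD('n) * K * dirichlet_form W y"
proof -
  have "(norm (laplacian W y i))\<^sup>2 \<le> real CARD('n) * K * (\<Sum>j\<in>UNIV. (y i - y j) \<bullet> (W i j *v (y i - y j)))"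
    for i
  proof -
    have "(norm (laplacian W y i))\<^sup>2 \<le> (\<Sum>j\<in>UNIV. norm (W i j *v (y i - y j)))\<^sup>2"
      unfolding laplacian_def by (intro power_mono norm_sum) simp
    also have "\<dots> \<le> real CARD('n) * (\<Sum>j\<in>UNIV. (norm (W i j *v (y i - y j)))\<^sup>2)"
      using sum_squared_le_sum_of_squares[of "\<lambda>j. norm (W i j *v (y i - y j))" UNIV]
      by (simp add: ac_simps)
    also have "\<dots> \<le> real CARD('n) * (\<Sum>j\<in>UNIV. K * ((y i - y j) \<bullet> (W i j *v (y i - y j))))"
      using W assms unfolding symmetric_psd_weights_def
      by (intro mult_left_mono sum_mono psd_mat_norm_sq_le) auto
    finally show ?thesis by (simp add: sum_distrib_left ac_simps)
  qed
  then have "(\<Sum>i\<in>UNIV. (norm (laplacian W y i))\<^sup>2)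
      \<le> (\<Sum>i\<in>UNIV. real CARD('n) * K * (\<Sum>j\<in>UNIV. (y i - y j) \<bullet> (W i j *v (y i - y j))))"
    by (rule sum_mono)
  also have "\<dots> = real CARD('n) * K * dirichlet_form W y"
    by (simp add: dirichlet_form_def sum_distrib_left)
  finally show ?thesis .
qed

end

section \<open>Switched Laplacian flows\<close>

locale dwell_time_sequence =
  fixes tk :: "nat \<Rightarrow> real" and \<alpha> :: real
  assumes tk_0: "tk 0 = 0" and dwell_pos: "0 < \<alpha>" and dwell: "\<And>k. \<alpha> \<le> tk (Suc k) - tk k"
begin

lemma tk_add_dwell_le: "i \<le> j \<Longrightarrow> tk i + real (j - i) * \<alpha> \<le> tk j"
proof (induction j rule: dec_induct)
  case (step j)
  then show ?case using dwell[of j] by (simp add: Suc_diff_le algebra_simps)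
qed simp

lemma tk_mono: "i \<le> j \<Longrightarrow> tk i \<le> tk j"
proof -
  assume "i \<le> j"
  have "0 \<le> real (j - i) * \<alpha>" using dwell_pos by simp
  with tk_add_dwell_le[OF \<open>i \<le> j\<close>] show ?thesis by linarith
qed

lemma tk_strict_mono: "i < j \<Longrightarrow> tk i < tk j"
proof -
  assume "i < j"
  then have "0 < real (j - i) * \<alpha>" using dwell_pos by simp
  with tk_add_dwell_le[of i j] \<open>i < j\<close> show ?thesis by simp
qed

lemma tk_nonneg: "0 \<le> tk k"
  using tk_mono[of 0 k] tk_0 by simp

lemma ex_switching_interval:
  assumes "0 \<le> t"
  obtains k where "tk k \<le> t" "t < tk (Suc k)"
proof -
  define S where "S = {k. tk k \<le> t}"
  have "k \<le> nat \<lceil>t / \<alpha>\<rceil>" if "k \<in> S" for k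
  proof -
    have "real k * \<alpha> \<le> t" using tk_add_dwell_le[of 0 k] tk_0 that by (simp add: S_def)
    then have "real k \<le> t / \<alpha>" using dwell_pos by (simp add: field_simps)
    then show ?thesis by (simp add: le_nat_iff le_ceiling_iff)
  qed
  then have "finite S" by (meson finite_atMost finite_subset subsetI atMost_iff)
  moreover have "0 \<in> S" using assms tk_0 by (simp add: S_def)
  ultimately have "Max S \<in> S" by (intro Max_in) auto
  moreover have "Suc (Max S) \<notin> S" using Max_ge[OF \<open>finite S\<close>] Suc_n_not_le_n by blast
  ultimately show thesis by (intro that[of "Max S"]) (auto simp: S_def)
qed

lemma has_integral_piecewise_constant:
  fixes f :: "real \<Rightarrow> 'a::banach"
  assumes const: "\<And>k t. tk k \<le> t \<Longrightarrow> t < tk (Suc k) \<Longrightarrow> f t = f (tk k)" and "m \<le> m'"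
  shows "(f has_integral (\<Sum>k\<in>{m..<m'}. (tk (Suc k) - tk k) *\<^sub>R f (tk k))) {tk m..tk m'}"
  using \<open>m \<le> m'\<close>
proof (induction m' rule: dec_induct)
  case base
  show ?case by (simp add: has_integral_refl)
next
  case (step k)
  have "((\<lambda>_. f (tk k)) has_integral (tk (Suc k) - tk k) *\<^sub>R f (tk k)) {tk k..tk (Suc k)}"
    using has_integral_const_real[of "f (tk k)" "tk k" "tk (Suc k)"] tk_mono[of k "Suc k"] by simp
  then have "(f has_integral (tk (Suc k) - tk k) *\<^sub>R f (tk k)) {tk k..tk (Suc k)}"
    by (rule has_integral_spike_finite[where S = "{tk (Suc k)}", rotated 2]) (auto intro: const)
  moreover have "tk m \<le> tk k" "tk k \<le> tk (Suc k)" using step.hyps by (simp_all add: tk_mono)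
  ultimately have "(f has_integral (\<Sum>k\<in>{m..<k}. (tk (Suc k) - tk k) *\<^sub>R f (tk k))
      + (tk (Suc k) - tk k) *\<^sub>R f (tk k)) {tk m..tk (Suc k)}"
    using step.IH by (intro has_integral_combine)
  with step.hyps show ?case by simp
qed

end

locale laplacian_flow =
  fixes W :: "real \<Rightarrow> 'n::finite \<Rightarrow> 'n \<Rightarrow> real^'d^'d" and y :: "real \<Rightarrow> 'n \<Rightarrow> real^'d"
  assumes weights: "\<And>t. symmetric_psd_weights (W t)"
    and flow_continuous: "\<And>i. continuous_on {0..} (\<lambda>t. y t i)"
    and flow_deriv: "\<And>t i. 0 \<le> t \<Longrightarrow>
      ((\<lambda>s. y s i) has_vector_derivative - laplacian (W t) (y t) i) (at t within {t..})"
begin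

lemma continuous_on_flow: "0 \<le> a \<Longrightarrow> continuous_on {a..b} (\<lambda>t. y t i)"
  by (rule continuous_on_subset[OF flow_continuous]) auto

lemma continuous_on_energy: "0 \<le> a \<Longrightarrow> continuous_on {a..b} (\<lambda>t. energy (y t))"
  unfolding energy_def by (intro continuous_intros continuous_on_flow)

lemma continuous_on_dirichlet_form: "0 \<le> a \<Longrightarrow> continuous_on {a..b} (\<lambda>t. dirichlet_form V (y t))"
  unfolding dirichlet_form_def by (intro continuous_intros continuous_on_flow)

lemma energy_deriv:
  assumes "0 \<le> t"
  shows "((\<lambda>s. energy (y s)) has_real_derivative - dirichlet_form (W t) (y t)) (at t within {t..})"
proof -
  let ?L = "laplacian (W t) (y t)"
  have "((\<lambda>s. \<Sum>i\<in>UNIV. y s i \<bullet> y s i) has_vector_derivative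
      (\<Sum>i\<in>UNIV. y t i \<bullet> - ?L i + - ?L i \<bullet> y t i)) (at t within {t..})"
    by (intro has_vector_derivative_sum bounded_bilinear.has_vector_derivative[OF bounded_bilinear_inner]
        flow_deriv assms)
  moreover have "(\<Sum>i\<in>UNIV. y t i \<bullet> - ?L i + - ?L i \<bullet> y t i) = - 2 * (\<Sum>i\<in>UNIV. y t i \<bullet> ?L i)"
    by (simp add: inner_commute sum_negf sum_distrib_left)
  ultimately show ?thesis
    by (simp add: energy_def has_real_derivative_iff_has_vector_derivative
        inner_laplacian_sum[OF weights[of t]])
qed

lemma energy_antimono:
  assumes "0 \<le> a" "a \<le> b"
  shows "energy (y b) \<le> energy (y a)"
proof -
  have "- energy (y a) \<le> - energy (y b)"
  proof (rule right_deriv_nonneg_imp_le[OF assms(2), where f = "\<lambda>t. - energy (y t)"])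
    show "continuous_on {a..b} (\<lambda>t. - energy (y t))"
      by (intro continuous_on_minus continuous_on_energy assms(1))
    fix t assume "a \<le> t" "t < b"
    with assms(1) show "((\<lambda>t. - energy (y t)) has_real_derivative dirichlet_form (W t) (y t))
        (at t within {t..})"
      using DERIV_minus[OF energy_deriv[of t]] by simp
  qed (rule dirichlet_form_nonneg[OF weights])
  then show ?thesis by simp
qed

lemma sum_flow_eq:
  assumes "0 \<le> t"
  shows "(\<Sum>i\<in>UNIV. y t i) = (\<Sum>i\<in>UNIV. y 0 i)"
proof -
  have "norm ((\<Sum>i\<in>UNIV. y t i) - (\<Sum>i\<in>UNIV. y 0 i)) \<le> 0 - 0"
  proof (rule norm_diff_le_right_deriv[OF assms, where \<phi> = "\<lambda>_. 0" and \<phi>' = "\<lambda>_. 0"])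
    show "continuous_on {0..t} (\<lambda>s. \<Sum>i\<in>UNIV. y s i)"
      by (intro continuous_intros continuous_on_flow) simp
    fix s :: real assume "0 \<le> s"
    then show "((\<lambda>s. \<Sum>i\<in>UNIV. y s i) has_vector_derivative (\<Sum>i\<in>UNIV. - laplacian (W s) (y s) i))
        (at s within {s..})"
      by (intro has_vector_derivative_sum flow_deriv)
    show "norm (\<Sum>i\<in>UNIV. - laplacian (W s) (y s) i) \<le> 0"
      by (simp add: sum_negf sum_laplacian_eq_0[OF weights])
  qed simp_all
  then show ?thesis by simp
qed

lemma dirichlet_form_deriv:
  assumes "0 \<le> t" "W t = V"
  shows "((\<lambda>s. dirichlet_form V (y s)) has_real_derivative
    - 4 * (\<Sum>i\<in>UNIV. (norm (laplacian V (y t) i))\<^sup>2)) (at t within {t..})"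
proof -
  have V: "symmetric_psd_weights V" using weights assms(2) by metis
  let ?g = "laplacian V (y t)"
  let ?e = "\<lambda>i j. y t i - y t j"
  have edge: "((\<lambda>s. y s i - y s j) has_vector_derivative ?g j - ?g i) (at t within {t..})" for i j
    using has_vector_derivative_diff[OF flow_deriv[OF assms(1), of i] flow_deriv[OF assms(1), of j]]
      assms(2)
    by simp
  have "((\<lambda>s. dirichlet_form V (y s)) has_vector_derivative
     (\<Sum>i\<in>UNIV. \<Sum>j\<in>UNIV. ?e i j \<bullet> (V i j *v (?g j - ?g i)) + (?g j - ?g i) \<bullet> (V i j *v ?e i j)))
     (at t within {t..})"
    unfolding dirichlet_form_def
    by (intro has_vector_derivative_sum bounded_bilinear.has_vector_derivative[OF bounded_bilinear_inner]
        bounded_linear.has_vector_derivative[OF matrix_vector_mul_bounded_linear] edge)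
  moreover have "?e i j \<bullet> (V i j *v (?g j - ?g i)) + (?g j - ?g i) \<bullet> (V i j *v ?e i j)
      = 2 * ((V i j *v ?e i j) \<bullet> (?g j - ?g i))" for i j
    using V symmetric_matrix_inner_commute[of "V i j" "?e i j" "?g j - ?g i"]
    by (simp add: symmetric_psd_weights_def inner_commute)
  moreover have "(\<Sum>i\<in>UNIV. \<Sum>j\<in>UNIV. 2 * ((V i j *v ?e i j) \<bullet> (?g j - ?g i)))
      = - 4 * (\<Sum>i\<in>UNIV. (norm (?g i))\<^sup>2)"
    using dirichlet_form_inner_laplacian[OF V, of "y t"]
    by (simp add: power2_norm_eq_inner flip: sum_distrib_left)
  ultimately show ?thesis
    by (simp add: has_real_derivative_iff_has_vector_derivative)
qed

lemma dirichlet_form_antimono: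
  assumes "0 \<le> a" "\<And>s. a \<le> s \<Longrightarrow> s < b \<Longrightarrow> W s = W a" "a \<le> t" "t \<le> t'" "t' \<le> b"
  shows "dirichlet_form (W a) (y t') \<le> dirichlet_form (W a) (y t)"
proof -
  have "- dirichlet_form (W a) (y t) \<le> - dirichlet_form (W a) (y t')"
  proof (rule right_deriv_nonneg_imp_le[OF assms(4), where f = "\<lambda>s. - dirichlet_form (W a) (y s)"])
    show "continuous_on {t..t'} (\<lambda>s. - dirichlet_form (W a) (y s))"
      using assms(1,3) by (intro continuous_on_minus continuous_on_dirichlet_form) simp
    fix s assume "t \<le> s" "s < t'"
    with assms(1,3,5) have "0 \<le> s" "W s = W a" using assms(2)[of s] by simp_all
    then show "((\<lambda>s. - dirichlet_form (W a) (y s)) has_real_derivative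
        - (- 4 * (\<Sum>i\<in>UNIV. (norm (laplacian (W a) (y s) i))\<^sup>2))) (at s within {s..})"
      by (intro DERIV_minus dirichlet_form_deriv)
    show "0 \<le> - (- 4 * (\<Sum>i\<in>UNIV. (norm (laplacian (W a) (y s) i))\<^sup>2))"
      by (simp add: sum_nonneg)
  qed
  then show ?thesis by simp
qed

end

locale switched_laplacian_flow = laplacian_flow W y + dwell_time_sequence tk \<alpha>
  for W :: "real \<Rightarrow> 'n::finite \<Rightarrow> 'n \<Rightarrow> real^'d^'d" and y tk \<alpha> +
  fixes K :: real
  assumes piecewise_constant: "\<And>k t. tk k \<le> t \<Longrightarrow> t < tk (Suc k) \<Longrightarrow> W t = W (tk k)"
    and weight_bound: "\<And>t i j. 0 \<le> t \<Longrightarrow> onorm ((*v) (W t i j)) \<le> K"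
    and weight_bound_pos: "0 < K"
begin

lemma dirichlet_form_lower_bound:
  assumes "0 \<le> a" and const: "\<And>s. a \<le> s \<Longrightarrow> s < b \<Longrightarrow> W s = W a" and "a \<le> t" "t \<le> b"
  shows "dirichlet_form (W a) (y a) * (1 - 4 * real CARD('n) * K * (t - a)) \<le> dirichlet_form (W a) (y t)"
proof -
  define c where "c = 4 * real CARD('n) * K * dirichlet_form (W a) (y a)"
  have "dirichlet_form (W a) (y a) + c * (a - a) \<le> dirichlet_form (W a) (y t) + c * (t - a)"
  proof (rule right_deriv_nonneg_imp_le[OF \<open>a \<le> t\<close>,
        where f = "\<lambda>s. dirichlet_form (W a) (y s) + c * (s - a)"])
    show "continuous_on {a..t} (\<lambda>s. dirichlet_form (W a) (y s) + c * (s - a))"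
      using assms(1) by (intro continuous_intros continuous_on_dirichlet_form)
    fix s assume s: "a \<le> s" "s < t"
    with assms(1,4) have "0 \<le> s" "W s = W a" using const[of s] by simp_all
    then show "((\<lambda>s. dirichlet_form (W a) (y s) + c * (s - a)) has_real_derivative
        - 4 * (\<Sum>i\<in>UNIV. (norm (laplacian (W a) (y s) i))\<^sup>2) + c) (at s within {s..})"
      by (intro DERIV_add dirichlet_form_deriv has_real_derivative_affine)
    have "(\<Sum>i\<in>UNIV. (norm (laplacian (W a) (y s) i))\<^sup>2) \<le> real CARD('n) * K * dirichlet_form (W a) (y s)"
      using sum_norm_laplacian_sq_le[OF weights weight_bound[OF assms(1)]] .
    also have "\<dots> \<le> real CARD('n) * K * dirichlet_form (W a) (y a)"
      using dirichlet_form_antimono[OF assms(1) const, where t = a and t' = s] s assms(3,4) weight_bound_pos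
      by (intro mult_left_mono) auto
    finally show "0 \<le> - 4 * (\<Sum>i\<in>UNIV. (norm (laplacian (W a) (y s) i))\<^sup>2) + c"
      by (simp add: c_def)
  qed
  then show ?thesis by (simp add: c_def algebra_simps)
qed

lemma energy_drop_ge:
  assumes "0 \<le> a" and const: "\<And>s. a \<le> s \<Longrightarrow> s < b \<Longrightarrow> W s = W a"
    and "a \<le> t" "t \<le> b" and short: "8 * real CARD('n) * K * (t - a) \<le> 1"
  shows "(t - a) * dirichlet_form (W a) (y a) / 2 \<le> energy (y a) - energy (y t)"
proof -
  define p where "p = dirichlet_form (W a) (y a) / 2"
  have "- energy (y a) - p * (a - a) \<le> - energy (y t) - p * (t - a)"
  proof (rule right_deriv_nonneg_imp_le[OF \<open>a \<le> t\<close>,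
        where f = "\<lambda>s. - energy (y s) - p * (s - a)"])
    show "continuous_on {a..t} (\<lambda>s. - energy (y s) - p * (s - a))"
      using assms(1) by (intro continuous_intros continuous_on_energy)
    fix s assume s: "a \<le> s" "s < t"
    with assms(1,4) have "0 \<le> s" "W s = W a" using const[of s] by simp_all
    then have "((\<lambda>s. energy (y s)) has_real_derivative - dirichlet_form (W a) (y s)) (at s within {s..})"
      using energy_deriv[of s] by simp
    then show "((\<lambda>s. - energy (y s) - p * (s - a)) has_real_derivative
        - (- dirichlet_form (W a) (y s)) - p) (at s within {s..})"
      by (intro DERIV_diff DERIV_minus has_real_derivative_affine)
    have "4 * real CARD('n) * K * (s - a) \<le> 4 * real CARD('n) * K * (t - a)"
      using s weight_bound_pos by (intro mult_left_mono) simp_all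
    with short have "1 / 2 \<le> 1 - 4 * real CARD('n) * K * (s - a)" by linarith
    then have "dirichlet_form (W a) (y a) * (1 / 2)
        \<le> dirichlet_form (W a) (y a) * (1 - 4 * real CARD('n) * K * (s - a))"
      by (intro mult_left_mono dirichlet_form_nonneg[OF weights])
    also have "\<dots> \<le> dirichlet_form (W a) (y s)"
      using dirichlet_form_lower_bound[OF assms(1) const, of s] s assms(3,4) by simp
    finally show "0 \<le> - (- dirichlet_form (W a) (y s)) - p" by (simp add: p_def)
  qed
  then show ?thesis by (simp add: p_def algebra_simps)
qed

text \<open>A time span shorter than every dwell time, over which the Dirichlet form of a frozen
  network stays above half its initial value.\<close>
definition probe_time :: real where
  "probe_time = min \<alpha> (1 / (8 * real CARD('n) * K))"

lemma probe_time_pos: "0 < probe_time"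
  using dwell_pos weight_bound_pos by (simp add: probe_time_def)

lemma dirichlet_form_le_energy_drop:
  assumes "tk k \<le> t" "t < tk (Suc k)"
  shows "dirichlet_form (W t) (y t)
    \<le> 2 / probe_time * (energy (y (tk k)) - energy (y (tk (Suc k))))"
proof -
  have const: "W s = W (tk k)" if "tk k \<le> s" "s < tk (Suc k)" for s
    using piecewise_constant that .
  have probe: "tk k + probe_time \<le> tk (Suc k)"
    using dwell[of k] by (simp add: probe_time_def)
  have "dirichlet_form (W t) (y t) \<le> dirichlet_form (W (tk k)) (y (tk k))"
    using dirichlet_form_antimono[OF tk_nonneg const, where t = "tk k" and t' = t] const[OF assms] assms by simp
  also have "\<dots> \<le> 2 / probe_time * (energy (y (tk k)) - energy (y (tk k + probe_time)))"
  proof -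
    have "probe_time \<le> 1 / (8 * real CARD('n) * K)" by (simp add: probe_time_def)
    then have "8 * real CARD('n) * K * probe_time \<le> 1"
      using weight_bound_pos by (simp add: field_simps)
    then have "probe_time * dirichlet_form (W (tk k)) (y (tk k)) / 2
        \<le> energy (y (tk k)) - energy (y (tk k + probe_time))"
      using energy_drop_ge[OF tk_nonneg const, where t = "tk k + probe_time"] probe probe_time_pos by simp
    then show ?thesis using probe_time_pos by (simp add: field_simps)
  qed
  also have "\<dots> \<le> 2 / probe_time * (energy (y (tk k)) - energy (y (tk (Suc k))))"
    using energy_antimono[of "tk k + probe_time" "tk (Suc k)"] tk_nonneg[of k] probe probe_time_pos
    by (intro mult_left_mono) simp_all
  finally show ?thesis .
qed

end

section \<open>Consensus under persistent excitation\<close>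

lemma norm_diff_le_relpow:
  fixes z :: "'a \<Rightarrow> 'b::real_normed_vector"
  assumes "(i, j) \<in> R ^^ m" "\<And>u v. (u, v) \<in> R \<Longrightarrow> norm (z u - z v) \<le> c"
  shows "norm (z i - z j) \<le> real m * c"
  using assms(1)
proof (induction m arbitrary: j)
  case (Suc m)
  then obtain k where k: "(i, k) \<in> R ^^ m" "(k, j) \<in> R" by auto
  have "norm (z i - z j) \<le> norm (z i - z k) + norm (z k - z j)"
    using norm_triangle_ineq[of "z i - z k" "z k - z j"] by simp
  also have "\<dots> \<le> real m * c + c" using Suc.IH[OF k(1)] assms(2)[OF k(2)] by (rule add_mono)
  finally show ?case by (simp add: algebra_simps)
qed simp

lemma norm_diff_le_rtrancl:
  fixes z :: "'a \<Rightarrow> 'b::real_normed_vector"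
  assumes "finite R" "(i, j) \<in> R\<^sup>*" "0 \<le> c" "\<And>u v. (u, v) \<in> R \<Longrightarrow> norm (z u - z v) \<le> c"
  shows "norm (z i - z j) \<le> real (card R) * c"
proof -
  obtain m where m: "m \<le> card R" "(i, j) \<in> R ^^ m"
    using relpow_finite_bounded[OF assms(1)] rtrancl_imp_relpow[OF assms(2)] by blast
  have "norm (z i - z j) \<le> real m * c" by (rule norm_diff_le_relpow[OF m(2) assms(4)])
  also have "\<dots> \<le> real (card R) * c" using m(1) assms(3) by (intro mult_right_mono) simp_all
  finally show ?thesis .
qed

lemma sum_norm_sq_diff_mean:
  fixes z :: "'n::finite \<Rightarrow> real^'d"
  assumes "(\<Sum>i\<in>UNIV. z i) = real CARD('n) *\<^sub>R m"
  shows "(\<Sum>i\<in>UNIV. (norm (z i - m))\<^sup>2) = energy z - real CARD('n) * (m \<bullet> m)"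
proof -
  have "(\<Sum>i\<in>UNIV. (norm (z i - m))\<^sup>2) = (\<Sum>i\<in>UNIV. z i \<bullet> z i - 2 * (z i \<bullet> m) + m \<bullet> m)"
    by (simp add: power2_norm_eq_inner inner_diff_left inner_diff_right inner_commute algebra_simps)
  also have "\<dots> = energy z - 2 * ((\<Sum>i\<in>UNIV. z i) \<bullet> m) + real CARD('n) * (m \<bullet> m)"
    by (simp add: energy_def sum.distrib sum_subtractf sum_distrib_left inner_sum_left)
  finally show ?thesis using assms by simp
qed

lemma norm_diff_mean_le:
  fixes z :: "'n::finite \<Rightarrow> 'a::real_normed_vector"
  assumes "\<And>j. norm (z i - z j) \<le> C"
  shows "norm (z i - (1 / real CARD('n)) *\<^sub>R (\<Sum>j\<in>UNIV. z j)) \<le> C"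
proof -
  have "z i - (1 / real CARD('n)) *\<^sub>R (\<Sum>j\<in>UNIV. z j) = (1 / real CARD('n)) *\<^sub>R (\<Sum>j\<in>UNIV. z i - z j)"
    by (simp add: sum_subtractf scaleR_diff_right sum_constant_scaleR)
  then have "norm (z i - (1 / real CARD('n)) *\<^sub>R (\<Sum>j\<in>UNIV. z j))
      = norm (\<Sum>j\<in>UNIV. z i - z j) / real CARD('n)"
    by simp
  also have "\<dots> \<le> (\<Sum>j\<in>(UNIV::'n set). C) / real CARD('n)"
    by (intro divide_right_mono order_trans[OF norm_sum] sum_mono assms) simp
  finally show ?thesis by simp
qed

locale persistently_excited_flow = switched_laplacian_flow W y tk \<alpha> K
  for W :: "real \<Rightarrow> 'n::finite \<Rightarrow> 'n \<Rightarrow> real^'d^'d" and y tk \<alpha> K +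
  fixes kl :: "nat \<Rightarrow> nat" and h \<mu> :: real
  assumes kl_strict_mono: "strict_mono kl"
    and window_length: "\<And>l. tk (kl (Suc l)) - tk (kl l) \<le> h"
    and excitation_pos: "0 < \<mu>"
    and excitation: "\<And>l. \<exists>E. (\<forall>i j. (i, j) \<in> E\<^sup>*) \<and> (\<forall>(u, v) \<in> E. \<forall>e.
      \<mu> * (tk (kl (Suc l)) - tk (kl l)) * (norm e)\<^sup>2
        \<le> integral {tk (kl l)..tk (kl (Suc l))} (\<lambda>t. e \<bullet> (W t u v *v e)))"
begin

abbreviation \<tau> :: "nat \<Rightarrow> real" where "\<tau> l \<equiv> tk (kl l)"

definition window_drop :: "nat \<Rightarrow> real" where
  "window_drop l = energy (y (\<tau> l)) - energy (y (\<tau> (Suc l)))"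

lemma window_less: "\<tau> l < \<tau> (Suc l)"
  using kl_strict_mono by (simp add: strict_mono_def tk_strict_mono)

lemma window_drop_nonneg: "0 \<le> window_drop l"
  using energy_antimono[OF tk_nonneg less_imp_le[OF window_less]] by (simp add: window_drop_def)

lemma dirichlet_form_le_window_drop:
  assumes "\<tau> l \<le> t" "t < \<tau> (Suc l)"
  shows "dirichlet_form (W t) (y t) \<le> 2 / probe_time * window_drop l"
proof -
  obtain k where k: "tk k \<le> t" "t < tk (Suc k)"
    using ex_switching_interval[OF order_trans[OF tk_nonneg assms(1)]] .
  have "kl l \<le> k"
  proof (rule ccontr)
    assume "\<not> kl l \<le> k"
    then have "tk (Suc k) \<le> \<tau> l" by (intro tk_mono) simp
    with k assms show False by simp
  qed
  moreover have "Suc k \<le> kl (Suc l)"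
  proof (rule ccontr)
    assume "\<not> Suc k \<le> kl (Suc l)"
    then have "\<tau> (Suc l) \<le> tk k" by (intro tk_mono) simp
    with k assms show False by simp
  qed
  ultimately have "energy (y (tk k)) \<le> energy (y (\<tau> l))"
    "energy (y (\<tau> (Suc l))) \<le> energy (y (tk (Suc k)))"
    by (simp_all add: energy_antimono tk_mono tk_nonneg)
  then have "energy (y (tk k)) - energy (y (tk (Suc k))) \<le> window_drop l"
    by (simp add: window_drop_def)
  then have "2 / probe_time * (energy (y (tk k)) - energy (y (tk (Suc k))))
      \<le> 2 / probe_time * window_drop l"
    using probe_time_pos by (intro mult_left_mono) simp_all
  with dirichlet_form_le_energy_drop[OF k] show ?thesis by linarith
qed

definition speed_bound :: "nat \<Rightarrow> real" where
  "speed_bound l = sqrt (real CARD('n) * K * (2 / probe_time * window_drop l))"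

lemma speed_bound_nonneg: "0 \<le> speed_bound l"
  using weight_bound_pos probe_time_pos window_drop_nonneg[of l] by (simp add: speed_bound_def)

lemma norm_laplacian_le_speed_bound:
  assumes "\<tau> l \<le> t" "t < \<tau> (Suc l)"
  shows "norm (laplacian (W t) (y t) i) \<le> speed_bound l"
proof -
  have t: "0 \<le> t" using assms(1) tk_nonneg order_trans by blast
  have "(norm (laplacian (W t) (y t) i))\<^sup>2 \<le> (\<Sum>j\<in>UNIV. (norm (laplacian (W t) (y t) j))\<^sup>2)"
    by (rule member_le_sum) simp_all
  also have "\<dots> \<le> real CARD('n) * K * dirichlet_form (W t) (y t)"
    by (rule sum_norm_laplacian_sq_le[OF weights weight_bound[OF t]])
  also have "\<dots> \<le> real CARD('n) * K * (2 / probe_time * window_drop l)"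
    using dirichlet_form_le_window_drop[OF assms] weight_bound_pos by (intro mult_left_mono) simp_all
  finally show ?thesis unfolding speed_bound_def by (rule real_le_rsqrt)
qed

lemma flow_increment_le:
  assumes "\<tau> l \<le> t" "t \<le> \<tau> (Suc l)"
  shows "norm (y t i - y (\<tau> l) i) \<le> h * speed_bound l"
proof -
  have "norm (y t i - y (\<tau> l) i) \<le> speed_bound l * (t - \<tau> l) - speed_bound l * (\<tau> l - \<tau> l)"
  proof (rule norm_diff_le_right_deriv[OF assms(1)])
    show "continuous_on {\<tau> l..t} (\<lambda>t. y t i)" by (rule continuous_on_flow[OF tk_nonneg])
    show "continuous_on {\<tau> l..t} (\<lambda>s. speed_bound l * (s - \<tau> l))" by (intro continuous_intros)
    fix s assume s: "\<tau> l \<le> s" "s < t"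
    then show "((\<lambda>t. y t i) has_vector_derivative - laplacian (W s) (y s) i) (at s within {s..})"
      using tk_nonneg order_trans by (blast intro: flow_deriv)
    show "((\<lambda>s. speed_bound l * (s - \<tau> l)) has_real_derivative speed_bound l) (at s within {s..})"
      by (rule has_real_derivative_affine)
    show "norm (- laplacian (W s) (y s) i) \<le> speed_bound l"
      using norm_laplacian_le_speed_bound[of l s] s assms(2) by simp
  qed
  also have "\<dots> = (t - \<tau> l) * speed_bound l" by (simp add: algebra_simps)
  also have "\<dots> \<le> h * speed_bound l"
    using window_length[of l] assms speed_bound_nonneg[of l] by (intro mult_right_mono) simp_all
  finally show ?thesis .
qed

definition edge_gain :: real where
  "edge_gain = (4 + 16 * real CARD('n) * K\<^sup>2 * h\<^sup>2) / probe_time"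

lemma edge_drift_sq_le:
  assumes "\<tau> l \<le> t" "t \<le> \<tau> (Suc l)"
  shows "(norm ((y (\<tau> l) u - y (\<tau> l) v) - (y t u - y t v)))\<^sup>2
    \<le> 8 * h\<^sup>2 * real CARD('n) * K * window_drop l / probe_time"
proof -
  have "norm ((y (\<tau> l) u - y (\<tau> l) v) - (y t u - y t v))
      \<le> norm (y t u - y (\<tau> l) u) + norm (y t v - y (\<tau> l) v)"
    using norm_triangle_ineq4[of "y t u - y (\<tau> l) u" "y t v - y (\<tau> l) v"]
    by (simp add: algebra_simps norm_minus_commute)
  also have "\<dots> \<le> 2 * h * speed_bound l"
    using flow_increment_le[OF assms, of u] flow_increment_le[OF assms, of v] by simp
  finally have "(norm ((y (\<tau> l) u - y (\<tau> l) v) - (y t u - y t v)))\<^sup>2 \<le> (2 * h * speed_bound l)\<^sup>2"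
    by (simp add: power_mono)
  also have "\<dots> = 8 * h\<^sup>2 * real CARD('n) * K * window_drop l / probe_time"
    using weight_bound_pos window_drop_nonneg[of l] probe_time_pos
    by (simp add: speed_bound_def power_mult_distrib)
  finally show ?thesis .
qed

lemma edge_quadratic_form_le:
  fixes u v :: 'n
  assumes "\<tau> l \<le> t" "t < \<tau> (Suc l)"
  defines "e \<equiv> y (\<tau> l) u - y (\<tau> l) v"
  shows "e \<bullet> (W t u v *v e) \<le> edge_gain * window_drop l"
proof -
  define e\<^sub>t where "e\<^sub>t = y t u - y t v"
  define d where "d = e - e\<^sub>t"
  have t: "0 \<le> t" using assms(1) tk_nonneg order_trans by blast
  have B: "transpose (W t u v) = W t u v" "psd_mat (W t u v)"
    using weights[of t] by (simp_all add: symmetric_psd_weights_def)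
  have "e \<bullet> (W t u v *v e) \<le> 2 * (e\<^sub>t \<bullet> (W t u v *v e\<^sub>t)) + 2 * (d \<bullet> (W t u v *v d))"
    using psd_mat_quadratic_form_add_le[OF B, of e\<^sub>t d] by (simp add: d_def)
  also have "\<dots> \<le> 2 * (2 / probe_time * window_drop l) + 2 * (K * (norm d)\<^sup>2)"
  proof (intro add_mono mult_left_mono)
    have "e\<^sub>t \<bullet> (W t u v *v e\<^sub>t) \<le> dirichlet_form (W t) (y t)"
      unfolding e\<^sub>t_def by (rule dirichlet_form_ge_term[OF weights])
    also have "\<dots> \<le> 2 / probe_time * window_drop l"
      by (rule dirichlet_form_le_window_drop[OF assms(1,2)])
    finally show "e\<^sub>t \<bullet> (W t u v *v e\<^sub>t) \<le> 2 / probe_time * window_drop l" .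
    have "d \<bullet> (W t u v *v d) \<le> onorm ((*v) (W t u v)) * (norm d)\<^sup>2"
      using quadratic_form_le_onorm[of d "W t u v"] by linarith
    also have "\<dots> \<le> K * (norm d)\<^sup>2" by (intro mult_right_mono weight_bound t) simp
    finally show "d \<bullet> (W t u v *v d) \<le> K * (norm d)\<^sup>2" .
  qed simp_all
  also have "\<dots> \<le> edge_gain * window_drop l"
  proof -
    have "2 * K * (norm d)\<^sup>2 \<le> 2 * K * (8 * h\<^sup>2 * real CARD('n) * K * window_drop l / probe_time)"
      using edge_drift_sq_le[of l t u v] assms(1,2) weight_bound_pos
      by (intro mult_left_mono) (simp_all add: d_def e_def e\<^sub>t_def)
    then show ?thesis by (simp add: edge_gain_def add_divide_distrib power2_eq_square algebra_simps)
  qed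
  finally show ?thesis .
qed

lemma window_integral_le:
  fixes u v :: 'n and l :: nat
  defines "e \<equiv> y (\<tau> l) u - y (\<tau> l) v"
  shows "integral {\<tau> l..\<tau> (Suc l)} (\<lambda>t. e \<bullet> (W t u v *v e))
    \<le> (\<tau> (Suc l) - \<tau> l) * (edge_gain * window_drop l)"
proof -
  have kl_le: "kl l \<le> kl (Suc l)" using kl_strict_mono by (simp add: strict_mono_less_eq)
  have "((\<lambda>t. e \<bullet> (W t u v *v e)) has_integral
      (\<Sum>k\<in>{kl l..<kl (Suc l)}. (tk (Suc k) - tk k) * (e \<bullet> (W (tk k) u v *v e)))) {\<tau> l..\<tau> (Suc l)}"
    using has_integral_piecewise_constant[OF _ kl_le, of "\<lambda>t. e \<bullet> (W t u v *v e)"] piecewise_constant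
    by simp
  then have "integral {\<tau> l..\<tau> (Suc l)} (\<lambda>t. e \<bullet> (W t u v *v e))
      = (\<Sum>k\<in>{kl l..<kl (Suc l)}. (tk (Suc k) - tk k) * (e \<bullet> (W (tk k) u v *v e)))"
    by (rule integral_unique)
  also have "\<dots> \<le> (\<Sum>k\<in>{kl l..<kl (Suc l)}. (tk (Suc k) - tk k) * (edge_gain * window_drop l))"
  proof (intro sum_mono mult_left_mono)
    fix k assume "k \<in> {kl l..<kl (Suc l)}"
    then have "\<tau> l \<le> tk k" "tk k < \<tau> (Suc l)" by (simp_all add: tk_mono tk_strict_mono)
    then show "e \<bullet> (W (tk k) u v *v e) \<le> edge_gain * window_drop l"
      unfolding e_def by (rule edge_quadratic_form_le)
    show "0 \<le> tk (Suc k) - tk k" using tk_mono[of k "Suc k"] by simp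
  qed
  also have "\<dots> = (\<tau> (Suc l) - \<tau> l) * (edge_gain * window_drop l)"
    by (simp add: sum_Suc_diff'[OF kl_le] flip: sum_distrib_right)
  finally show ?thesis .
qed

lemma excited_edge_le:
  assumes "\<forall>e. \<mu> * (\<tau> (Suc l) - \<tau> l) * (norm e)\<^sup>2 \<le> integral {\<tau> l..\<tau> (Suc l)} (\<lambda>t. e \<bullet> (W t u v *v e))"
  shows "norm (y (\<tau> l) u - y (\<tau> l) v) \<le> sqrt (edge_gain / \<mu> * window_drop l)"
proof -
  let ?e = "y (\<tau> l) u - y (\<tau> l) v"
  have "\<mu> * (\<tau> (Suc l) - \<tau> l) * (norm ?e)\<^sup>2 \<le> integral {\<tau> l..\<tau> (Suc l)} (\<lambda>t. ?e \<bullet> (W t u v *v ?e))"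
    using assms by blast
  also have "\<dots> \<le> (\<tau> (Suc l) - \<tau> l) * (edge_gain * window_drop l)"
    by (rule window_integral_le)
  finally have "(\<tau> (Suc l) - \<tau> l) * (\<mu> * (norm ?e)\<^sup>2) \<le> (\<tau> (Suc l) - \<tau> l) * (edge_gain * window_drop l)"
    by (simp add: ac_simps)
  then have "\<mu> * (norm (y (\<tau> l) u - y (\<tau> l) v))\<^sup>2 \<le> edge_gain * window_drop l"
    by (rule mult_left_le_imp_le) (use window_less[of l] in simp)
  then show ?thesis
    using excitation_pos by (intro real_le_rsqrt) (simp add: field_simps)
qed

definition mean :: "real^'d" where
  "mean = (1 / real CARD('n)) *\<^sub>R (\<Sum>j\<in>UNIV. y 0 j)"

definition disagreement :: "real \<Rightarrow> real" where
  "disagreement t = (\<Sum>i\<in>UNIV. (norm (y t i - mean))\<^sup>2)"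

lemma sum_flow_eq_mean: "0 \<le> t \<Longrightarrow> (\<Sum>i\<in>UNIV. y t i) = real CARD('n) *\<^sub>R mean"
  unfolding mean_def by (subst sum_flow_eq) simp_all

lemma disagreement_eq: "0 \<le> t \<Longrightarrow> disagreement t = energy (y t) - real CARD('n) * (mean \<bullet> mean)"
  unfolding disagreement_def by (rule sum_norm_sq_diff_mean[OF sum_flow_eq_mean])

lemma disagreement_nonneg: "0 \<le> disagreement t"
  unfolding disagreement_def by (simp add: sum_nonneg)

lemma disagreement_antimono: "0 \<le> a \<Longrightarrow> a \<le> b \<Longrightarrow> disagreement b \<le> disagreement a"
  using energy_antimono[of a b] disagreement_eq[of a] disagreement_eq[of b] by simp

lemma window_drop_eq_disagreement: "window_drop l = disagreement (\<tau> l) - disagreement (\<tau> (Suc l))"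
  by (simp add: window_drop_def disagreement_eq tk_nonneg)

lemma norm_diff_le_window_drop:
  "norm (y (\<tau> l) i - y (\<tau> l) j) \<le> (real CARD('n))\<^sup>2 * sqrt (edge_gain / \<mu> * window_drop l)"
proof -
  obtain E where conn: "\<And>i j. (i, j) \<in> E\<^sup>*" and excited: "\<And>u v. (u, v) \<in> E \<Longrightarrow> \<forall>e.
      \<mu> * (\<tau> (Suc l) - \<tau> l) * (norm e)\<^sup>2 \<le> integral {\<tau> l..\<tau> (Suc l)} (\<lambda>t. e \<bullet> (W t u v *v e))"
    using excitation[of l] by blast
  have "card E \<le> card (UNIV :: ('n \<times> 'n) set)" by (rule card_mono) simp_all
  then have card_E: "real (card E) \<le> (real CARD('n))\<^sup>2"
    by (simp add: card_cartesian_product power2_eq_square flip: UNIV_Times_UNIV of_nat_mult)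
  have "norm (y (\<tau> l) i - y (\<tau> l) j) \<le> real (card E) * sqrt (edge_gain / \<mu> * window_drop l)"
  proof (rule norm_diff_le_rtrancl[OF finite conn])
    show "0 \<le> sqrt (edge_gain / \<mu> * window_drop l)"
      using excitation_pos probe_time_pos weight_bound_pos window_drop_nonneg[of l]
      by (simp add: edge_gain_def)
  qed (rule excited_edge_le[OF excited])
  also have "\<dots> \<le> (real CARD('n))\<^sup>2 * sqrt (edge_gain / \<mu> * window_drop l)"
    using card_E excitation_pos probe_time_pos weight_bound_pos window_drop_nonneg[of l]
    by (intro mult_right_mono) (simp_all add: edge_gain_def)
  finally show ?thesis .
qed

lemma disagreement_le_window_drop:
  "disagreement (\<tau> l) \<le> (real CARD('n))^5 * (edge_gain / \<mu>) * window_drop l"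
proof -
  let ?C = "(real CARD('n))\<^sup>2 * sqrt (edge_gain / \<mu> * window_drop l)"
  have C_sq: "?C\<^sup>2 = (real CARD('n))^4 * (edge_gain / \<mu> * window_drop l)"
    using excitation_pos probe_time_pos weight_bound_pos window_drop_nonneg[of l]
    by (simp add: power_mult_distrib edge_gain_def flip: power_mult)
  have "norm (y (\<tau> l) i - mean) \<le> ?C" for i
    using norm_diff_mean_le[of "y (\<tau> l)" i ?C] norm_diff_le_window_drop[of l i]
      sum_flow_eq_mean[OF tk_nonneg, of "kl l"]
    by simp
  then have "(norm (y (\<tau> l) i - mean))\<^sup>2 \<le> ?C\<^sup>2" for i
    by (simp add: power_mono)
  then have "disagreement (\<tau> l) \<le> (\<Sum>i\<in>(UNIV :: 'n set). ?C\<^sup>2)"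
    unfolding disagreement_def by (rule sum_mono)
  also have "\<dots> = real CARD('n) * ?C\<^sup>2" by simp
  also have "\<dots> = (real CARD('n))^5 * (edge_gain / \<mu>) * window_drop l"
    unfolding C_sq by (simp add: mult.assoc flip: power_Suc)
  finally show ?thesis .
qed

lemma disagreement_contracts:
  obtains \<rho> where "0 \<le> \<rho>" "\<rho> < 1" "\<And>l. disagreement (\<tau> (Suc l)) \<le> \<rho> * disagreement (\<tau> l)"
proof
  define c where "c = (real CARD('n))^5 * (edge_gain / \<mu>) + 1"
  have "1 \<le> c"
    using excitation_pos probe_time_pos weight_bound_pos by (simp add: c_def edge_gain_def)
  then show "0 \<le> 1 - 1 / c" "1 - 1 / c < 1" by simp_all
  fix l
  have "disagreement (\<tau> l) \<le> c * (disagreement (\<tau> l) - disagreement (\<tau> (Suc l)))"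
    using disagreement_le_window_drop[of l] window_drop_nonneg[of l]
    by (simp add: c_def window_drop_eq_disagreement algebra_simps)
  with \<open>1 \<le> c\<close> show "disagreement (\<tau> (Suc l)) \<le> (1 - 1 / c) * disagreement (\<tau> l)"
    by (simp add: field_simps)
qed

lemma disagreement_tendsto_0: "(disagreement \<longlongrightarrow> 0) at_top"
proof -
  obtain \<rho> where \<rho>: "0 \<le> \<rho>" "\<rho> < 1" and contracts: "\<And>l. disagreement (\<tau> (Suc l)) \<le> \<rho> * disagreement (\<tau> l)"
    using disagreement_contracts by blast
  have geometric: "disagreement (\<tau> l) \<le> \<rho> ^ l * disagreement (\<tau> 0)" for l
  proof (induction l)
    case (Suc l)
    from contracts[of l] mult_left_mono[OF Suc.IH \<rho>(1)] show ?case by simp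
  qed simp
  show ?thesis
  proof (rule order_tendstoI)
    fix \<epsilon> :: real assume "0 < \<epsilon>"
    have "(\<lambda>l. \<rho> ^ l * disagreement (\<tau> 0)) \<longlonglongrightarrow> 0"
      by (rule tendsto_mult_left_zero[OF LIMSEQ_power_zero]) (use \<rho> in simp)
    from order_tendstoD(2)[OF this \<open>0 < \<epsilon>\<close>]
    obtain L where L: "\<rho> ^ L * disagreement (\<tau> 0) < \<epsilon>"
      by (auto simp: eventually_sequentially)
    have "disagreement t < \<epsilon>" if "\<tau> L \<le> t" for t
      using disagreement_antimono[OF tk_nonneg that] geometric[of L] L by simp
    then show "\<forall>\<^sub>F t in at_top. disagreement t < \<epsilon>"
      unfolding eventually_at_top_linorder by blast
  next
    fix \<epsilon> :: real assume "\<epsilon> < 0"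
    then have "\<epsilon> < disagreement t" for t using disagreement_nonneg[of t] by linarith
    then show "\<forall>\<^sub>F t in at_top. \<epsilon> < disagreement t" by (rule always_eventually[OF allI])
  qed
qed

lemma flow_tendsto_mean: "((\<lambda>t. y t i) \<longlongrightarrow> mean) at_top"
proof -
  have "norm (y t i - mean) \<le> sqrt (disagreement t)" for t
  proof (rule real_le_rsqrt)
    show "(norm (y t i - mean))\<^sup>2 \<le> disagreement t"
      unfolding disagreement_def by (rule member_le_sum) simp_all
  qed
  then have "\<forall>\<^sub>F t in at_top. norm (y t i - mean) \<le> sqrt (disagreement t)" by simp
  moreover have "((\<lambda>t. sqrt (disagreement t)) \<longlongrightarrow> 0) at_top"
    using tendsto_real_sqrt[OF disagreement_tendsto_0] by simp
  ultimately have "((\<lambda>t. y t i - mean) \<longlongrightarrow> 0) at_top"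
    by (rule Lim_null_comparison)
  then show ?thesis by (simp add: LIM_zero_iff)
qed

end

section \<open>Signed switching networks\<close>

lemma valid_network_symmetric: "valid_network A \<Longrightarrow> transpose (A t i j) = A t i j"
  by (simp add: valid_network_def)

lemma valid_network_abs_weights:
  assumes "valid_network A"
  shows "symmetric_psd_weights (\<lambda>i j. abs_mat (A t i j))"
  unfolding symmetric_psd_weights_def
proof (intro allI conjI)
  fix i j
  have "transpose (- A t i j) = - A t i j"
    using valid_network_symmetric[OF assms, of t i j] by (simp add: transpose_def vec_eq_iff)
  then show "transpose (abs_mat (A t i j)) = abs_mat (A t i j)"
    using valid_network_symmetric[OF assms, of t i j] by (simp add: abs_mat_def)
  show "psd_mat (abs_mat (A t i j))"
    using assms by (auto simp: valid_network_def abs_mat_def nsd_mat_def)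
  show "abs_mat (A t i j) = abs_mat (A t j i)"
    using assms by (simp add: valid_network_def)
qed

text \<open>Since the sign type of an edge never changes, absolute values commute with integration.\<close>
lemma valid_network_abs_mat_eq_scaleR:
  assumes "valid_network A"
  obtains c where "\<bar>c\<bar> = 1" "\<And>t. abs_mat (A t u v) = c *\<^sub>R A t u v"
proof (cases "\<forall>t. psd_mat (A t u v)")
  case True
  then show thesis by (intro that[of 1]) (simp_all add: abs_mat_def)
next
  case False
  then have nsd: "nsd_mat (A t u v)" for t using assms unfolding valid_network_def by blast
  have "abs_mat (A t u v) = (-1) *\<^sub>R A t u v" for t
    using psd_nsd_mat_imp_0[OF valid_network_symmetric[OF assms] _ nsd, of t]
    by (auto simp: abs_mat_def)
  then show thesis by (intro that[of "-1"]) simp_all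
qed

locale switching_network = dwell_time_sequence tk \<alpha> for tk \<alpha> +
  fixes A :: "real \<Rightarrow> 'n::finite \<Rightarrow> 'n \<Rightarrow> real^'d^'d"
  assumes valid: "valid_network A"
    and switching: "\<And>k t. tk k \<le> t \<Longrightarrow> t < tk (Suc k) \<Longrightarrow> A t = A (tk k)"
begin

lemma has_integral_weight:
  "m \<le> m' \<Longrightarrow> ((\<lambda>t. A t u v) has_integral (\<Sum>k\<in>{m..<m'}. (tk (Suc k) - tk k) *\<^sub>R A (tk k) u v))
    {tk m..tk m'}"
  using has_integral_piecewise_constant[of "\<lambda>t. A t u v"] switching by simp

lemma integral_weight_eq:
  "m \<le> m' \<Longrightarrow> integral_weight A (tk m) (tk m') u v
    = (1 / (tk m' - tk m)) *\<^sub>R (\<Sum>k\<in>{m..<m'}. (tk (Suc k) - tk k) *\<^sub>R A (tk k) u v)"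
  unfolding integral_weight_def using integral_unique[OF has_integral_weight] by simp

lemma integral_abs_quadratic_form:
  assumes "m < m'"
  shows "integral {tk m..tk m'} (\<lambda>t. e \<bullet> (abs_mat (A t u v) *v e))
    = (tk m' - tk m) * \<bar>e \<bullet> (integral_weight A (tk m) (tk m') u v *v e)\<bar>"
proof -
  obtain c where c: "\<bar>c\<bar> = 1" "\<And>t. abs_mat (A t u v) = c *\<^sub>R A t u v"
    using valid_network_abs_mat_eq_scaleR[OF valid, of u v] by blast
  define S where "S = (\<Sum>k\<in>{m..<m'}. (tk (Suc k) - tk k) *\<^sub>R A (tk k) u v)"
  have "((\<lambda>t. e \<bullet> (A t u v *v e)) has_integral e \<bullet> (S *v e)) {tk m..tk m'}"
    using has_integral_linear[OF has_integral_weight linear_conv_bounded_linear[THEN iffD1,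
        OF linear_quadratic_form]] assms
    by (simp add: S_def o_def)
  then have I: "((\<lambda>t. e \<bullet> (abs_mat (A t u v) *v e)) has_integral c * (e \<bullet> (S *v e))) {tk m..tk m'}"
    using has_integral_mult_right by (simp add: c(2) flip: scaleR_matrix_vector_assoc)
  have "0 \<le> c * (e \<bullet> (S *v e))"
    using valid_network_abs_weights[OF valid]
    by (intro has_integral_nonneg[OF I]) (simp add: symmetric_psd_weights_def psd_mat_def)
  then have "c * (e \<bullet> (S *v e)) = \<bar>e \<bullet> (S *v e)\<bar>" using c(1) by (metis abs_mult abs_of_nonneg mult_1)
  moreover have "tk m < tk m'" using assms by (rule tk_strict_mono)
  ultimately show ?thesis
    using integral_unique[OF I] integral_weight_eq[of m m' u v] assms
    by (simp add: S_def abs_mult flip: scaleR_matrix_vector_assoc)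
qed

lemma finite_window_weights:
  assumes "finite T" "\<And>k. tk (Suc k) - tk k \<in> T" "finite G" "\<And>k. A (tk k) \<in> G"
    and "\<And>l. m l \<le> m' l" "\<And>l. m' l - m l \<le> N"
  shows "finite (range (\<lambda>(l, u, v). integral_weight A (tk (m l)) (tk (m' l)) u v))"
proof -
  define avg where "avg L u v = (1 / sum_list (map fst L)) *\<^sub>R sum_list (map (\<lambda>(\<delta>, g). \<delta> *\<^sub>R g u v) L)"
    for L :: "(real \<times> ('n \<Rightarrow> 'n \<Rightarrow> real^'d^'d)) list" and u v
  define pieces where "pieces l = map (\<lambda>k. (tk (Suc k) - tk k, A (tk k))) [m l..<m' l]" for l
  define Ls where "Ls = {L. set L \<subseteq> T \<times> G \<and> length L \<le> N}"
  have "integral_weight A (tk (m l)) (tk (m' l)) u v = avg (pieces l) u v" for l u v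
  proof -
    have "tk (m' l) - tk (m l) = (\<Sum>k\<in>{m l..<m' l}. tk (Suc k) - tk k)"
      by (rule sum_Suc_diff'[OF assms(5), symmetric])
    then show ?thesis
      using integral_weight_eq[OF assms(5), of l u v]
      by (simp add: avg_def pieces_def o_def sum_set_upt_conv_sum_list_nat[symmetric])
  qed
  moreover have "pieces l \<in> Ls" for l
    using assms(2,4,6) by (auto simp: pieces_def Ls_def)
  ultimately have "range (\<lambda>(l, u, v). integral_weight A (tk (m l)) (tk (m' l)) u v)
      \<subseteq> (\<lambda>(L, u, v). avg L u v) ` (Ls \<times> UNIV \<times> UNIV)"
    by (auto intro!: image_eqI[where x = "(pieces l, u, v)" for l u v])
  moreover have "finite Ls"
    unfolding Ls_def using assms(1,3) by (intro finite_lists_length_le) simp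
  then have "finite ((\<lambda>(L, u, v). avg L u v) ` (Ls \<times> UNIV \<times> UNIV))" by simp
  ultimately show ?thesis by (rule finite_subset)
qed

lemma abs_weight_bound:
  assumes "finite G" "\<And>k. A (tk k) \<in> G"
  obtains K where "0 < K" "\<And>t i j. 0 \<le> t \<Longrightarrow> onorm ((*v) (abs_mat (A t i j))) \<le> K"
proof
  define norms where "norms = (\<lambda>(g, i, j). onorm ((*v) (abs_mat (g i j)))) ` (G \<times> UNIV \<times> UNIV)"
  define K where "K = Max (insert 1 norms)"
  have fin: "finite (insert 1 norms)" using assms(1) by (simp add: norms_def)
  have "1 \<le> K" unfolding K_def by (rule Max_ge[OF fin]) simp
  then show "0 < K" by simp
  fix t :: real and i j assume "0 \<le> t"
  then obtain k where "tk k \<le> t" "t < tk (Suc k)" by (rule ex_switching_interval)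
  then have "A t \<in> G" using switching assms(2) by simp
  then have "onorm ((*v) (abs_mat (A t i j))) \<in> insert 1 norms"
    unfolding norms_def by (intro insertI2 image_eqI[where x = "(A t, i, j)"]) simp_all
  with fin show "onorm ((*v) (abs_mat (A t i j))) \<le> K" unfolding K_def by (rule Max_ge)
qed

end

lemma gauge_edge_term:
  assumes valid: "valid_network A" and balanced: "simultaneously_structurally_balanced A V1 V2"
  defines "\<sigma> \<equiv> \<lambda>i. if i \<in> V1 then 1 else -1 :: real"
  shows "\<sigma> i *\<^sub>R (abs_mat (A t i j) *v (x i - sgn_mat (A t i j) *\<^sub>R x j))
    = abs_mat (A t i j) *v (\<sigma> i *\<^sub>R x i - \<sigma> j *\<^sub>R x j)"
proof (cases "A t i j = 0")
  case True
  then show ?thesis by (simp add: abs_mat_def psd_mat_def)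
next
  case nonzero: False
  have parts: "i \<notin> V1 \<longleftrightarrow> i \<in> V2" for i
    using balanced by (auto simp: simultaneously_structurally_balanced_def)
  show ?thesis
  proof (cases "i \<in> V1 \<longleftrightarrow> j \<in> V1")
    case True
    then have "(i \<in> V1 \<and> j \<in> V1) \<or> (i \<in> V2 \<and> j \<in> V2)" using parts by blast
    then have "psd_mat (A t i j)"
      using balanced unfolding simultaneously_structurally_balanced_def by blast
    with nonzero True show ?thesis
      by (simp add: \<sigma>_def sgn_mat_def abs_mat_def matrix_vector_mult_scaleR
          matrix_vector_mult_diff_distrib scaleR_diff_right)
  next
    case False
    then have "(i \<in> V1 \<and> j \<in> V2) \<or> (i \<in> V2 \<and> j \<in> V1)" using parts by blast
    then have "nsd_mat (A t i j)"
      using balanced unfolding simultaneously_structurally_balanced_def by blast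
    then have "\<not> psd_mat (A t i j)"
      using psd_nsd_mat_imp_0[OF valid_network_symmetric[OF valid]] nonzero by blast
    with nonzero False show ?thesis
      by (auto simp: \<sigma>_def sgn_mat_def abs_mat_def matrix_vector_mult_scaleR
          matrix_vector_mult_diff_distrib matrix_vector_right_distrib scaleR_diff_right algebra_simps)
  qed
qed

lemma gauge_transform_laplacian_flow:
  assumes valid: "valid_network A" and balanced: "simultaneously_structurally_balanced A V1 V2"
    and sol: "solves_network A x"
  defines "\<sigma> \<equiv> \<lambda>i. if i \<in> V1 then 1 else -1 :: real"
  shows "laplacian_flow (\<lambda>t i j. abs_mat (A t i j)) (\<lambda>t i. \<sigma> i *\<^sub>R x t i)"
proof
  show "symmetric_psd_weights (\<lambda>i j. abs_mat (A t i j))" for t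
    by (rule valid_network_abs_weights[OF valid])
  show "continuous_on {0..} (\<lambda>t. \<sigma> i *\<^sub>R x t i)" for i
    using sol by (intro continuous_intros) (simp add: solves_network_def)
  fix t :: real and i assume "0 \<le> t"
  then have "((\<lambda>s. x s i) has_vector_derivative
      - (\<Sum>j\<in>UNIV. abs_mat (A t i j) *v (x t i - sgn_mat (A t i j) *\<^sub>R x t j))) (at t within {t..})"
    using sol by (simp add: solves_network_def)
  from bounded_linear.has_vector_derivative[OF bounded_linear_scaleR_right this, of "\<sigma> i"]
  show "((\<lambda>s. \<sigma> i *\<^sub>R x s i) has_vector_derivative
      - laplacian (\<lambda>i j. abs_mat (A t i j)) (\<lambda>i. \<sigma> i *\<^sub>R x t i) i) (at t within {t..})"
    using gauge_edge_term[OF valid balanced, where x = "x t" and t = t and i = i]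
    by (simp add: laplacian_def scaleR_sum_right \<sigma>_def)
qed

lemma bipartite_consensus_if_signed_limits:
  assumes "\<And>i. ((\<lambda>t. x t i) \<longlongrightarrow> (if i \<in> P then 1 else -1 :: real) *\<^sub>R v) at_top"
  shows "bipartite_consensus x"
proof -
  have lim: "Lim at_top (\<lambda>t. x t i) = (if i \<in> P then 1 else -1 :: real) *\<^sub>R v" for i
    by (rule tendsto_Lim[OF trivial_limit_at_top_linorder assms])
  show ?thesis
    unfolding bipartite_consensus_def
  proof (intro conjI)
    show "\<forall>i. \<exists>l. ((\<lambda>t. x t i) \<longlongrightarrow> l) at_top" using assms by blast
    show "\<exists>P. \<forall>i j. ((i \<in> P \<longleftrightarrow> j \<in> P) \<longrightarrow> Lim at_top (\<lambda>t. x t i) = Lim at_top (\<lambda>t. x t j)) \<and>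
        ((i \<in> P \<longleftrightarrow> j \<notin> P) \<longrightarrow> Lim at_top (\<lambda>t. x t i) \<noteq> Lim at_top (\<lambda>t. x t j))"
    proof (cases "v = 0")
      \<comment> \<open>All limits vanish, so a single part is a valid partition.\<close>
      case True
      then show ?thesis by (intro exI[of _ UNIV]) (simp add: lim)
    next
      case False
      then show ?thesis
        by (intro exI[of _ P]) (auto simp: lim scaleR_left_commute eq_neg_iff_add_eq_0 simp flip: scaleR_2)
    qed
  qed
qed

lemma assumption1_switching_network:
  assumes "valid_network A" "assumption1 A tk"
  obtains \<alpha> where "switching_network tk \<alpha> A"
  using assms unfolding assumption1_def
  by (metis dwell_time_sequence.intro switching_network.intro switching_network_axioms.intro)

context switching_network
begin

lemma window_pieces_le:
  assumes "strict_mono kl" "tk (kl (Suc l)) - tk (kl l) \<le> h"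
  shows "kl (Suc l) - kl l \<le> nat \<lceil>h / \<alpha>\<rceil>"
proof -
  have "kl l \<le> kl (Suc l)" using assms(1) by (simp add: strict_mono_less_eq)
  then have "real (kl (Suc l) - kl l) * \<alpha> \<le> h"
    using tk_add_dwell_le[of "kl l" "kl (Suc l)"] assms(2) by simp
  then have "real (kl (Suc l) - kl l) \<le> h / \<alpha>" using dwell_pos by (simp add: field_simps)
  then show ?thesis by (simp add: le_nat_iff le_ceiling_iff)
qed

text \<open>Assumption 3 leaves only finitely many possible integral networks, whence a uniform
  definiteness constant.\<close>
lemma window_weights_uniformly_coercive:
  assumes "assumption3 A tk" "strict_mono kl" "\<And>l. tk (kl (Suc l)) - tk (kl l) \<le> h"
  obtains \<mu> where "0 < \<mu>" "\<And>l u v e. pd_mat (integral_weight A (tk (kl l)) (tk (kl (Suc l))) u v)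
      \<or> nd_mat (integral_weight A (tk (kl l)) (tk (kl (Suc l))) u v) \<Longrightarrow>
    \<mu> * (norm e)\<^sup>2 \<le> \<bar>e \<bullet> (integral_weight A (tk (kl l)) (tk (kl (Suc l))) u v *v e)\<bar>"
proof -
  obtain G where G: "finite G" "\<And>k. A (tk k) \<in> G"
    using assms(1) unfolding assumption3_def assumption2_def by blast
  obtain T where T: "finite T" "\<And>k. tk (Suc k) - tk k \<in> T"
    using assms(1) unfolding assumption3_def by blast
  define Ws where "Ws = {W \<in> range (\<lambda>(l, u, v). integral_weight A (tk (kl l)) (tk (kl (Suc l))) u v).
    pd_mat W \<or> nd_mat W}"
  have "finite (range (\<lambda>(l, u, v). integral_weight A (tk (kl l)) (tk (kl (Suc l))) u v))"
    using assms(2) window_pieces_le[OF assms(2,3)]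
    by (intro finite_window_weights[OF T G]) (simp_all add: strict_mono_less_eq)
  then have "finite Ws" by (simp add: Ws_def)
  then obtain \<mu> where "0 < \<mu>" and coercive: "\<And>W e. W \<in> Ws \<Longrightarrow> \<mu> * (norm e)\<^sup>2 \<le> \<bar>e \<bullet> (W *v e)\<bar>"
  proof (rule finite_definite_mats_uniformly_coercive)
    show "pd_mat W \<or> nd_mat W" if "W \<in> Ws" for W using that by (simp add: Ws_def)
  qed blast
  show thesis
  proof (rule that[OF \<open>0 < \<mu>\<close>], rule coercive)
    fix l u v
    assume "pd_mat (integral_weight A (tk (kl l)) (tk (kl (Suc l))) u v)
      \<or> nd_mat (integral_weight A (tk (kl l)) (tk (kl (Suc l))) u v)"
    then show "integral_weight A (tk (kl l)) (tk (kl (Suc l))) u v \<in> Ws"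
      by (auto simp: Ws_def intro: image_eqI[where x = "(l, u, v)"])
  qed
qed

lemma pn_spanning_tree_excitation:
  assumes "m < m'" and tree: "has_pn_spanning_tree_integral A (tk m) (tk m')"
    and coercive: "\<And>u v e. pd_mat (integral_weight A (tk m) (tk m') u v)
      \<or> nd_mat (integral_weight A (tk m) (tk m') u v) \<Longrightarrow>
      \<mu> * (norm e)\<^sup>2 \<le> \<bar>e \<bullet> (integral_weight A (tk m) (tk m') u v *v e)\<bar>"
  shows "\<exists>E. (\<forall>i j. (i, j) \<in> E\<^sup>*) \<and> (\<forall>(u, v) \<in> E. \<forall>e. \<mu> * (tk m' - tk m) * (norm e)\<^sup>2
    \<le> integral {tk m..tk m'} (\<lambda>t. e \<bullet> (abs_mat (A t u v) *v e)))"
proof -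
  obtain Tr where "spanning_tree Tr" and definite: "\<And>u v. {u, v} \<in> Tr \<Longrightarrow>
      pd_mat (integral_weight A (tk m) (tk m') u v) \<or> nd_mat (integral_weight A (tk m) (tk m') u v)"
    using tree unfolding has_pn_spanning_tree_integral_def by blast
  have "\<mu> * (tk m' - tk m) * (norm e)\<^sup>2 \<le> integral {tk m..tk m'} (\<lambda>t. e \<bullet> (abs_mat (A t u v) *v e))"
    if "{u, v} \<in> Tr" for u v e
  proof -
    have "(tk m' - tk m) * (\<mu> * (norm e)\<^sup>2)
        \<le> (tk m' - tk m) * \<bar>e \<bullet> (integral_weight A (tk m) (tk m') u v *v e)\<bar>"
      using coercive[OF definite[OF that]] tk_strict_mono[OF \<open>m < m'\<close>] by (intro mult_left_mono) simp_all
    then show ?thesis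
      using integral_abs_quadratic_form[OF \<open>m < m'\<close>, where e = e and u = u and v = v] by (simp add: ac_simps)
  qed
  with \<open>spanning_tree Tr\<close> show ?thesis
    by (intro exI[of _ "{(u, v). {u, v} \<in> Tr}"]) (auto simp: spanning_tree_def)
qed

lemma persistently_excited_gauge_flow:
  assumes balanced: "simultaneously_structurally_balanced A V1 V2" and sol: "solves_network A x"
    and as3: "assumption3 A tk" and kl: "strict_mono kl"
    and window: "\<And>l. tk (kl (Suc l)) - tk (kl l) \<le> h"
    and trees: "\<And>l. has_pn_spanning_tree_integral A (tk (kl l)) (tk (kl (Suc l)))"
  defines "\<sigma> \<equiv> \<lambda>i. if i \<in> V1 then 1 else -1 :: real"
  obtains K \<mu> where "persistently_excited_flow (\<lambda>t i j. abs_mat (A t i j)) (\<lambda>t i. \<sigma> i *\<^sub>R x t i) tk \<alpha> K kl h \<mu>"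
proof -
  obtain G where G: "finite G" "\<And>k. A (tk k) \<in> G"
    using as3 unfolding assumption3_def assumption2_def by blast
  obtain K where K: "0 < K" "\<And>t i j. 0 \<le> t \<Longrightarrow> onorm ((*v) (abs_mat (A t i j))) \<le> K"
    using abs_weight_bound[OF G] by blast
  obtain \<mu> where "0 < \<mu>" and coercive: "\<And>l u v e.
      pd_mat (integral_weight A (tk (kl l)) (tk (kl (Suc l))) u v)
      \<or> nd_mat (integral_weight A (tk (kl l)) (tk (kl (Suc l))) u v) \<Longrightarrow>
      \<mu> * (norm e)\<^sup>2 \<le> \<bar>e \<bullet> (integral_weight A (tk (kl l)) (tk (kl (Suc l))) u v *v e)\<bar>"
    using window_weights_uniformly_coercive[OF as3 kl window] by blast
  have excitation: "\<exists>E. (\<forall>i j. (i, j) \<in> E\<^sup>*) \<and> (\<forall>(u, v) \<in> E. \<forall>e.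
      \<mu> * (tk (kl (Suc l)) - tk (kl l)) * (norm e)\<^sup>2
        \<le> integral {tk (kl l)..tk (kl (Suc l))} (\<lambda>t. e \<bullet> (abs_mat (A t u v) *v e)))" for l
    using kl by (intro pn_spanning_tree_excitation trees coercive) (simp add: strict_mono_def)
  show thesis
  proof (rule that, intro persistently_excited_flow.intro switched_laplacian_flow.intro
      persistently_excited_flow_axioms.intro switched_laplacian_flow_axioms.intro)
    show "laplacian_flow (\<lambda>t i j. abs_mat (A t i j)) (\<lambda>t i. \<sigma> i *\<^sub>R x t i)"
      unfolding \<sigma>_def by (rule gauge_transform_laplacian_flow[OF valid balanced sol])
    show "(\<lambda>i j. abs_mat (A t i j)) = (\<lambda>i j. abs_mat (A (tk k) i j))"
      if "tk k \<le> t" "t < tk (Suc k)" for k t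
      using switching[OF that] by simp
  qed (fact dwell_time_sequence_axioms K kl window \<open>0 < \<mu>\<close> excitation)+
qed

end

theorem corollary17:
  fixes A :: "real \<Rightarrow> 'n::finite \<Rightarrow> 'n \<Rightarrow> real^'d^'d"
    and tk :: "nat \<Rightarrow> real"
    and V1 V2 :: "'n set"
    and x :: "real \<Rightarrow> 'n \<Rightarrow> real^'d"
    and kl :: "nat \<Rightarrow> nat"
    and h :: real
  assumes "CARD('n) > 1"
    and "valid_network A"
    and "assumption3 A tk"
    and "simultaneously_structurally_balanced A V1 V2"
    and "solves_network A x"
    and "strict_mono kl" and "kl 0 = 0" and "h > 0"
    and "\<forall>l. tk (kl (Suc l)) - tk (kl l) \<le> h"
    and "\<forall>l. has_pn_spanning_tree_integral A (tk (kl l)) (tk (kl (Suc l)))"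
  shows "bipartite_consensus x \<and>
    (let \<sigma> = (\<lambda>i. if i \<in> V1 then (1::real) else -1);
         v = (1 / real CARD('n)) *\<^sub>R (\<Sum>j\<in>UNIV. \<sigma> j *\<^sub>R x 0 j)
     in \<forall>i. ((\<lambda>t. x t i) \<longlongrightarrow> \<sigma> i *\<^sub>R v) at_top)"
proof -
  define \<sigma> where "\<sigma> i = (if i \<in> V1 then 1 else -1 :: real)" for i
  have "assumption1 A tk" using assms(3) by (simp add: assumption3_def)
  then obtain \<alpha> where network: "switching_network tk \<alpha> A"
    by (rule assumption1_switching_network[OF assms(2)])
  obtain K \<mu> where
    "persistently_excited_flow (\<lambda>t i j. abs_mat (A t i j)) (\<lambda>t i. \<sigma> i *\<^sub>R x t i) tk \<alpha> K kl h \<mu>"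
    using switching_network.persistently_excited_gauge_flow[OF network assms(4,5,3,6), of h] assms(9,10)
    unfolding \<sigma>_def by blast
  then interpret persistently_excited_flow "\<lambda>t i j. abs_mat (A t i j)" "\<lambda>t i. \<sigma> i *\<^sub>R x t i" tk \<alpha> K kl h \<mu> .
  have "((\<lambda>t. \<sigma> i *\<^sub>R (\<sigma> i *\<^sub>R x t i)) \<longlongrightarrow> \<sigma> i *\<^sub>R mean) at_top" for i
    by (intro tendsto_scaleR tendsto_const flow_tendsto_mean)
  moreover have "\<sigma> i * \<sigma> i = 1" for i by (simp add: \<sigma>_def)
  ultimately have limits: "((\<lambda>t. x t i) \<longlongrightarrow> \<sigma> i *\<^sub>R mean) at_top" for i
    by simp
  then have "bipartite_consensus x"
    by (intro bipartite_consensus_if_signed_limits[of x V1 mean]) (simp add: \<sigma>_def)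
  with limits show ?thesis by (simp add: Let_def mean_def flip: \<sigma>_def)
qed

end
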